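(* Let $k$ be a field of characteristic $p>0$ and let $d_1,\ldots,d_{n+1}$ be positive integers. If the algebra $k[x_1,\ldots,x_{n+1}]/(x_1^{d_1}, \ldots, x_{n+1}^{d_{n+1}})$ has the weak Lefschetz property, then there exist forms $f_1,\ldots,f_{n+1}\in R=k[x_1,\ldots,x_n]$ of degrees $d_1,\ldots,d_{n+1}$ such that \[(R/(f_1,\ldots,f_{n+1}))(t) = \left[\frac{\prod_{i=1}^{n+1}(1-t^{d_i})}{(1-t)^n} \right].\]
   Context: For a graded algebra $C=\bigoplus_{i\ge 0}C_i$ over $k$ with finite-dimensional components, $C(t)=\sum_{i\ge0}\dim_k(C_i)t^i$ is its Hilbert series. For a power series $\sum_{i\ge 0}a_it^i$ with integer coefficients, $[\sum_{i\ge0} a_i t^i]$ denotes its truncation at the first negative coefficient, i.e. $\sum_{i<i_0}a_it^i$ where $i_0$ is the least index with $a_{i_0}<0$ (the whole series if there is none). A graded artinian algebra $A$ has the weak Lefschetz property if there is a linear form $\ell\in A_1$ such that for every $i$ the map $A_i\to A_{i+1}$, $a\mapsto \ell a$, is injective or surjective. *)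

theory Defs
  imports "HOL-Library.Poly_Mapping" "HOL-Computational_Algebra.Formal_Power_Series"
begin

text \<open>Multivariate polynomials over a field: finitely supported maps from monomials
(exponent vectors, finitely supported maps nat to nat; variable x_(i+1) is index i)
to coefficients.\<close>

type_synonym 'a mpoly = "(nat \<Rightarrow>\<^sub>0 nat) \<Rightarrow>\<^sub>0 'a"

definition mscale :: "'a::field \<Rightarrow> 'a mpoly \<Rightarrow> 'a mpoly" where
  "mscale c p = Poly_Mapping.map (\<lambda>x. c * x) p"

definition mvar :: "nat \<Rightarrow> 'a::{zero,one} mpoly" where
  "mvar i = Poly_Mapping.single (Poly_Mapping.single i 1) 1"

definition mdeg :: "(nat \<Rightarrow>\<^sub>0 nat) \<Rightarrow> nat" where
  "mdeg m = (\<Sum>i\<in>Poly_Mapping.keys m. Poly_Mapping.lookup m i)"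

definition in_vars :: "nat \<Rightarrow> 'a::zero mpoly \<Rightarrow> bool" where
  "in_vars n p \<longleftrightarrow> (\<forall>m\<in>Poly_Mapping.keys p. Poly_Mapping.keys m \<subseteq> {..<n})"

text \<open>p is a form of degree j (0 is a form of every degree).\<close>
definition homog :: "nat \<Rightarrow> 'a::zero mpoly \<Rightarrow> bool" where
  "homog j p \<longleftrightarrow> (\<forall>m\<in>Poly_Mapping.keys p. mdeg m = j)"

definition gpart :: "nat \<Rightarrow> nat \<Rightarrow> 'a::zero mpoly set" where
  "gpart n j = {p. in_vars n p \<and> homog j p}"

definition ideal_gen :: "nat \<Rightarrow> (nat \<Rightarrow> 'a::field mpoly) \<Rightarrow> nat \<Rightarrow> 'a mpoly set" where
  "ideal_gen n F m = {(\<Sum>i<m. g i * F i) | g. \<forall>i<m. in_vars n (g i)}"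

lemma vector_space_mscale: "vector_space (mscale :: 'a::field \<Rightarrow> 'a mpoly \<Rightarrow> 'a mpoly)"
  apply unfold_locales
  apply (auto simp: mscale_def poly_mapping_eq_iff fun_eq_iff Poly_Mapping.map.rep_eq lookup_add when_def mult.assoc distrib_right)
  by (metis distrib_left mult_zero_right)+

definition kdim :: "'a::field mpoly set \<Rightarrow> nat" where
  "kdim S = vector_space.dim mscale S"

text \<open>Hilbert function of k[x_1,...,x_n]/I in degree j (I a homogeneous ideal):
dim_k of (R/I)_j = R_j/(I \<inter> R_j).\<close>
definition hilb_fun :: "nat \<Rightarrow> 'a::field mpoly set \<Rightarrow> nat \<Rightarrow> nat" where
  "hilb_fun n I j = kdim (gpart n j :: 'a mpoly set) - kdim (I \<inter> gpart n j)"

definition hilb_series :: "nat \<Rightarrow> 'a::field mpoly set \<Rightarrow> int fps" where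
  "hilb_series n I = Abs_fps (\<lambda>j. int (hilb_fun n I j))"

definition trunc_neg :: "int fps \<Rightarrow> int fps" where
  "trunc_neg a = Abs_fps (\<lambda>j. if (\<forall>i\<le>j. fps_nth a i \<ge> 0) then fps_nth a j else 0)"

text \<open>The power series 1/(1-t) = 1 + t + t^2 + ... with integer coefficients
(the inverse of 1 - t in Z[[t]]).\<close>
definition geom_fps :: "int fps" where
  "geom_fps = Abs_fps (\<lambda>_. 1)"

lemma geom_fps_inverse: "geom_fps * (1 - fps_X) = 1"
  by (simp add: geom_fps_def fps_eq_iff right_diff_distrib)

text \<open>Weak Lefschetz property of k[x_1,...,x_N]/I, elements of A_i represented by
forms of degree i modulo I.\<close>
definition WLP :: "nat \<Rightarrow> 'a::field mpoly set \<Rightarrow> bool" where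
  "WLP N I \<longleftrightarrow> (\<exists>l\<in>gpart N 1. \<forall>i.
      (\<forall>f\<in>gpart N i. l * f \<in> I \<longrightarrow> f \<in> I) \<or>
      (\<forall>g\<in>gpart N (Suc i). \<exists>f\<in>gpart N i. g - l * f \<in> I))"

end

theory Submission
  imports Defs
begin

text \<open>Let A = k[x_1,...,x_{n+1}]/(x_1^{d_1},...,x_{n+1}^{d_{n+1}}) have Hilbert function h and a
Lefschetz element l, which may be taken nonzero, with nonzero coefficient at x_j say. Eliminating
x_j by the substitution \<sigma> that kills l identifies A/lA with R/(f_1,...,f_{n+1}) where
f_i = \<sigma>(x_i)^{d_i}. So the Hilbert function of R/(f_1,...,f_{n+1}) in degree k + 1 is the dimension of
the cokernel of multiplication by l from A_k to A_{k+1}: it is h_{k+1} - h_k while that map is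
injective, and 0 once it is surjective, after which it stays surjective. Counting standard monomials
gives h(t) = \<Prod>(1 - t^{d_i})/(1 - t)^{n+1}, so this is the truncation of (1 - t) h(t) at its first
negative coefficient.\<close>

section \<open>Monomials and forms\<close>

lemma poly_mapping_sum_single:
  fixes p :: "'a \<Rightarrow>\<^sub>0 'b::comm_monoid_add"
  assumes "finite K" "Poly_Mapping.keys p \<subseteq> K"
  shows "p = (\<Sum>m\<in>K. Poly_Mapping.single m (Poly_Mapping.lookup p m))"
proof (rule poly_mapping_eqI)
  fix k
  have "(\<Sum>m\<in>K. Poly_Mapping.lookup (Poly_Mapping.single m (Poly_Mapping.lookup p m)) k)
      = (\<Sum>m\<in>K. if m = k then Poly_Mapping.lookup p m else 0)"
    by (rule sum.cong) (auto simp: lookup_single)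
  also have "\<dots> = Poly_Mapping.lookup p k"
    using assms by (cases "k \<in> K") (auto simp: in_keys_iff)
  finally show "Poly_Mapping.lookup p k
      = Poly_Mapping.lookup (\<Sum>m\<in>K. Poly_Mapping.single m (Poly_Mapping.lookup p m)) k"
    by (simp add: lookup_sum)
qed

lemma poly_mapping_sum_keys:
  fixes p :: "'a \<Rightarrow>\<^sub>0 'b::comm_monoid_add"
  shows "p = (\<Sum>m\<in>Poly_Mapping.keys p. Poly_Mapping.single m (Poly_Mapping.lookup p m))"
  by (rule poly_mapping_sum_single) auto

lemma keys_add_nat:
  "Poly_Mapping.keys (a + b) = Poly_Mapping.keys a \<union> Poly_Mapping.keys (b :: 'x \<Rightarrow>\<^sub>0 nat)"
  by (auto simp: in_keys_iff lookup_add)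

lemma keys_diff_subset:
  "Poly_Mapping.keys (p - q) \<subseteq> Poly_Mapping.keys p \<union> Poly_Mapping.keys (q :: 'x \<Rightarrow>\<^sub>0 'b::ab_group_add)"
  by (auto simp: in_keys_iff lookup_minus)

lemma keys_sum_subset: "Poly_Mapping.keys (sum f A) \<subseteq> (\<Union>i\<in>A. Poly_Mapping.keys (f i))"
proof (induction A rule: infinite_finite_induct)
  case (insert x F) then show ?case using keys_add[of "f x" "sum f F"] by auto
qed auto

lemma mdeg_eq_sum:
  assumes "finite K" "Poly_Mapping.keys m \<subseteq> K"
  shows "mdeg m = (\<Sum>i\<in>K. Poly_Mapping.lookup m i)"
  unfolding mdeg_def using assms
  by (intro sum.mono_neutral_left) (auto simp: in_keys_iff)

lemma mdeg_add: "mdeg (a + b) = mdeg a + mdeg b"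
proof -
  let ?K = "Poly_Mapping.keys a \<union> Poly_Mapping.keys b"
  have "mdeg (a + b) = (\<Sum>i\<in>?K. Poly_Mapping.lookup (a + b) i)"
    by (rule mdeg_eq_sum) (auto simp: keys_add_nat)
  also have "\<dots> = (\<Sum>i\<in>?K. Poly_Mapping.lookup a i) + (\<Sum>i\<in>?K. Poly_Mapping.lookup b i)"
    by (simp add: lookup_add sum.distrib)
  also have "\<dots> = mdeg a + mdeg b"
    using mdeg_eq_sum[of ?K a] mdeg_eq_sum[of ?K b] by simp
  finally show ?thesis .
qed

lemma mdeg_0 [simp]: "mdeg 0 = 0"
  by (simp add: mdeg_def)

lemma mdeg_single [simp]: "mdeg (Poly_Mapping.single i k) = k"
  by (simp add: mdeg_def)

lemma lookup_le_mdeg: "Poly_Mapping.lookup m i \<le> mdeg m"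
proof (cases "i \<in> Poly_Mapping.keys m")
  case True then show ?thesis unfolding mdeg_def by (intro member_le_sum) auto
qed (auto simp: in_keys_iff)

lemma mdeg_eq_1_imp_single:
  assumes "mdeg m = 1"
  obtains i where "m = Poly_Mapping.single i 1"
proof -
  have "Poly_Mapping.keys m \<noteq> {}" using assms by (auto simp: mdeg_def)
  then obtain i where i: "i \<in> Poly_Mapping.keys m" by blast
  have "mdeg m = Poly_Mapping.lookup m i + (\<Sum>k\<in>Poly_Mapping.keys m - {i}. Poly_Mapping.lookup m k)"
    unfolding mdeg_def using i by (simp add: sum.remove)
  moreover have "Poly_Mapping.lookup m i \<ge> 1" using i by (simp add: in_keys_iff)
  ultimately have li: "Poly_Mapping.lookup m i = 1"
    and rest: "(\<Sum>k\<in>Poly_Mapping.keys m - {i}. Poly_Mapping.lookup m k) = 0"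
    using assms by linarith+
  have "k \<noteq> i \<Longrightarrow> Poly_Mapping.lookup m k = 0" for k
    using rest by (auto simp: in_keys_iff)
  then have "m = Poly_Mapping.single i 1"
    using li by (intro poly_mapping_eqI) (auto simp: lookup_single when_def)
  then show ?thesis by (rule that)
qed

definition monoms :: "nat \<Rightarrow> nat \<Rightarrow> (nat \<Rightarrow>\<^sub>0 nat) set" where
  "monoms N j = {m. Poly_Mapping.keys m \<subseteq> {..<N} \<and> mdeg m = j}"

lemma finite_monoms: "finite (monoms N j)"
proof -
  let ?F = "{f. \<forall>x. (x \<in> {..<N} \<longrightarrow> f x \<in> {..j}) \<and> (x \<notin> {..<N} \<longrightarrow> f x = (0::nat))}"
  have "Poly_Mapping.lookup ` monoms N j \<subseteq> ?F"
  proof (intro image_subsetI CollectI allI conjI impI)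
    fix m x assume m: "m \<in> monoms N j"
    show "Poly_Mapping.lookup m x \<in> {..j}"
      using lookup_le_mdeg[of m x] m by (simp add: monoms_def)
    assume "x \<notin> {..<N}"
    then show "Poly_Mapping.lookup m x = 0"
      using m by (simp add: monoms_def in_keys_iff subset_iff) (metis neq0_conv)
  qed
  moreover have "finite ?F" by (rule finite_set_of_finite_funs) auto
  ultimately have "finite (Poly_Mapping.lookup ` monoms N j)" by (rule finite_subset)
  moreover have "inj_on Poly_Mapping.lookup (monoms N j)"
    by (auto intro!: inj_onI poly_mapping_eqI)
  ultimately show ?thesis using finite_imageD by blast
qed


lemma mscale_eq_const_mult: "mscale c p = Poly_Mapping.single 0 c * p"
  by (simp add: mscale_def mult_map_scale_conv_mult)

definition supported_in :: "(nat \<Rightarrow>\<^sub>0 nat) set \<Rightarrow> 'a::zero mpoly set" where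
  "supported_in M = {p. Poly_Mapping.keys p \<subseteq> M}"

lemma supported_in_add: "p \<in> supported_in M \<Longrightarrow> q \<in> supported_in M \<Longrightarrow> p + q \<in> supported_in M"
  unfolding supported_in_def mem_Collect_eq using keys_add[of p q] by (meson le_sup_iff order_trans)

lemma supported_in_uminus:
  "p \<in> supported_in M \<Longrightarrow> - (p :: 'a::ab_group_add mpoly) \<in> supported_in M"
  unfolding supported_in_def by (auto simp: in_keys_iff)

lemma supported_in_diff:
  "p \<in> supported_in M \<Longrightarrow> q \<in> supported_in M \<Longrightarrow> p - (q :: 'a::ab_group_add mpoly) \<in> supported_in M"
  unfolding supported_in_def mem_Collect_eq using keys_diff_subset[of p q] by (meson le_sup_iff order_trans)

lemma supported_in_sum:
  "(\<And>i. i \<in> A \<Longrightarrow> f i \<in> supported_in M) \<Longrightarrow> sum f A \<in> supported_in M"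
  unfolding supported_in_def mem_Collect_eq using keys_sum_subset[of f A] by (meson UN_least order_trans)

lemma supported_in_mult:
  assumes "p \<in> supported_in A" "q \<in> supported_in B" "\<And>a b. a \<in> A \<Longrightarrow> b \<in> B \<Longrightarrow> a + b \<in> C"
  shows "p * (q :: 'a::comm_ring_1 mpoly) \<in> supported_in C"
  using assms keys_mult[of p q] unfolding supported_in_def by fastforce

lemma in_vars_iff_supported_in: "in_vars n p \<longleftrightarrow> p \<in> supported_in {m. Poly_Mapping.keys m \<subseteq> {..<n}}"
  by (auto simp: in_vars_def supported_in_def)

lemma homog_iff_supported_in: "homog j p \<longleftrightarrow> p \<in> supported_in {m. mdeg m = j}"
  by (auto simp: homog_def supported_in_def)

lemma gpart_eq_supported_in: "gpart n j = supported_in (monoms n j)"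
  by (auto simp: gpart_def in_vars_def homog_def supported_in_def monoms_def)

lemma gpart_0 [simp]: "0 \<in> gpart n j"
  by (simp add: gpart_eq_supported_in supported_in_def)

lemma gpart_add: "p \<in> gpart n j \<Longrightarrow> q \<in> gpart n j \<Longrightarrow> p + q \<in> gpart n j"
  by (simp add: gpart_eq_supported_in supported_in_add)

lemma gpart_diff: "p \<in> gpart n j \<Longrightarrow> q \<in> gpart n j \<Longrightarrow> p - (q :: 'a::ab_group_add mpoly) \<in> gpart n j"
  by (simp add: gpart_eq_supported_in supported_in_diff)

lemma gpart_uminus: "p \<in> gpart n j \<Longrightarrow> - (p :: 'a::ab_group_add mpoly) \<in> gpart n j"
  by (simp add: gpart_eq_supported_in supported_in_uminus)

lemma gpart_sum: "(\<And>i. i \<in> A \<Longrightarrow> f i \<in> gpart n j) \<Longrightarrow> sum f A \<in> gpart n j"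
  by (simp add: gpart_eq_supported_in supported_in_sum)

lemma gpart_mult:
  "p \<in> gpart n a \<Longrightarrow> q \<in> gpart n b \<Longrightarrow> p * (q :: 'a::comm_ring_1 mpoly) \<in> gpart n (a + b)"
  unfolding gpart_eq_supported_in
  by (erule supported_in_mult, assumption) (auto simp: monoms_def mdeg_add keys_add_nat)

lemma gpart_one: "(1 :: 'a::comm_ring_1 mpoly) \<in> gpart n 0"
  by (simp add: gpart_def in_vars_def homog_def)

lemma gpart_single:
  "Poly_Mapping.keys m \<subseteq> {..<n} \<Longrightarrow> Poly_Mapping.single m c \<in> gpart n (mdeg m)"
  by (simp add: gpart_def in_vars_def homog_def)

lemma gpart_const: "Poly_Mapping.single 0 c \<in> gpart n 0"
  using gpart_single[of 0 n c] by simp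

lemma gpart_mscale: "p \<in> gpart n j \<Longrightarrow> mscale c p \<in> gpart n j"
  using gpart_mult[OF gpart_const] by (simp add: mscale_eq_const_mult)

lemma gpart_power: "p \<in> gpart n 1 \<Longrightarrow> (p :: 'a::comm_ring_1 mpoly) ^ k \<in> gpart n k"
  by (induction k) (auto simp: gpart_one dest: gpart_mult)

lemma mvar_in_gpart: "i < n \<Longrightarrow> (mvar i :: 'a::comm_ring_1 mpoly) \<in> gpart n 1"
  unfolding mvar_def using gpart_single[of "Poly_Mapping.single i 1" n 1] by simp

lemma gpart_in_vars: "p \<in> gpart n j \<Longrightarrow> in_vars n p"
  by (simp add: gpart_def)

lemma gpart_homog: "p \<in> gpart n j \<Longrightarrow> homog j p"
  by (simp add: gpart_def)

lemma in_vars_0 [simp]: "in_vars n 0"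
  by (simp add: in_vars_def)

lemma in_vars_add: "in_vars n p \<Longrightarrow> in_vars n q \<Longrightarrow> in_vars n (p + q)"
  by (simp add: in_vars_iff_supported_in supported_in_add)

lemma in_vars_sum: "(\<And>i. i \<in> A \<Longrightarrow> in_vars n (f i)) \<Longrightarrow> in_vars n (sum f A)"
  by (simp add: in_vars_iff_supported_in supported_in_sum)

lemma in_vars_mult:
  "in_vars n p \<Longrightarrow> in_vars n q \<Longrightarrow> in_vars n (p * (q :: 'a::comm_ring_1 mpoly))"
  unfolding in_vars_iff_supported_in
  by (erule supported_in_mult, assumption) (auto simp: keys_add_nat)

lemma in_vars_one: "in_vars n (1 :: 'a::comm_ring_1 mpoly)"
  by (rule gpart_in_vars[OF gpart_one])

lemma in_vars_const: "in_vars n (Poly_Mapping.single 0 c)"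
  by (simp add: in_vars_def)

lemma in_vars_power: "in_vars n p \<Longrightarrow> in_vars n (p ^ k :: 'a::comm_ring_1 mpoly)"
  by (induction k) (auto simp: in_vars_one in_vars_mult)

lemma in_vars_prod:
  "(\<And>i. i \<in> A \<Longrightarrow> in_vars n (f i)) \<Longrightarrow> in_vars n (prod f A :: 'a::comm_ring_1 mpoly)"
  by (induction A rule: infinite_finite_induct) (auto simp: in_vars_one in_vars_mult)

lemma homog_sum: "(\<And>i. i \<in> A \<Longrightarrow> homog j (f i)) \<Longrightarrow> homog j (sum f A)"
  by (simp add: homog_iff_supported_in supported_in_sum)

lemma homog_mult:
  "homog a p \<Longrightarrow> homog b q \<Longrightarrow> homog (a + b) (p * (q :: 'a::comm_ring_1 mpoly))"
  unfolding homog_iff_supported_in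
  by (erule supported_in_mult, assumption) (auto simp: mdeg_add)

lemma homog_one: "homog 0 (1 :: 'a::comm_ring_1 mpoly)"
  by (rule gpart_homog[OF gpart_one])

lemma homog_power: "homog 1 p \<Longrightarrow> homog k (p ^ k :: 'a::comm_ring_1 mpoly)"
  by (induction k) (auto simp: homog_one dest: homog_mult)

lemma homog_prod:
  "finite A \<Longrightarrow> (\<And>i. i \<in> A \<Longrightarrow> homog (e i) (f i)) \<Longrightarrow>
    homog (sum e A) (prod f A :: 'a::comm_ring_1 mpoly)"
  by (induction A rule: finite_induct) (auto simp: homog_one homog_mult)

lemma homog_single: "homog (mdeg m) (Poly_Mapping.single m c)"
  by (simp add: homog_def)

section \<open>Substitution\<close>

abbreviation mconst :: "'a \<Rightarrow> 'a::comm_ring_1 mpoly" where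
  "mconst c \<equiv> Poly_Mapping.single 0 c"

lemma mconst_mult: "mconst (a * b) = mconst a * mconst b"
  by (simp add: mult_single)

definition monom_subst :: "(nat \<Rightarrow> 'a::comm_ring_1 mpoly) \<Rightarrow> (nat \<Rightarrow>\<^sub>0 nat) \<Rightarrow> 'a mpoly" where
  "monom_subst \<sigma> m = (\<Prod>i\<in>Poly_Mapping.keys m. \<sigma> i ^ Poly_Mapping.lookup m i)"

definition msubst :: "(nat \<Rightarrow> 'a::comm_ring_1 mpoly) \<Rightarrow> 'a mpoly \<Rightarrow> 'a mpoly" where
  "msubst \<sigma> p = (\<Sum>m\<in>Poly_Mapping.keys p. mconst (Poly_Mapping.lookup p m) * monom_subst \<sigma> m)"

lemma monom_subst_eq_prod:
  assumes "finite K" "Poly_Mapping.keys m \<subseteq> K"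
  shows "monom_subst \<sigma> m = (\<Prod>i\<in>K. \<sigma> i ^ Poly_Mapping.lookup m i)"
  unfolding monom_subst_def using assms
  by (intro prod.mono_neutral_left) (auto simp: in_keys_iff)

lemma monom_subst_add: "monom_subst \<sigma> (a + b) = monom_subst \<sigma> a * monom_subst \<sigma> b"
proof -
  let ?K = "Poly_Mapping.keys a \<union> Poly_Mapping.keys b"
  have "monom_subst \<sigma> (a + b) = (\<Prod>i\<in>?K. \<sigma> i ^ Poly_Mapping.lookup (a + b) i)"
    by (rule monom_subst_eq_prod) (auto simp: keys_add_nat)
  also have "\<dots> = (\<Prod>i\<in>?K. \<sigma> i ^ Poly_Mapping.lookup a i) * (\<Prod>i\<in>?K. \<sigma> i ^ Poly_Mapping.lookup b i)"
    by (simp add: lookup_add power_add prod.distrib)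
  also have "\<dots> = monom_subst \<sigma> a * monom_subst \<sigma> b"
    using monom_subst_eq_prod[of ?K a \<sigma>] monom_subst_eq_prod[of ?K b \<sigma>] by simp
  finally show ?thesis .
qed

lemma msubst_eq_sum:
  assumes "finite K" "Poly_Mapping.keys p \<subseteq> K"
  shows "msubst \<sigma> p = (\<Sum>m\<in>K. mconst (Poly_Mapping.lookup p m) * monom_subst \<sigma> m)"
  unfolding msubst_def using assms
  by (intro sum.mono_neutral_left) (auto simp: in_keys_iff)

lemma msubst_add: "msubst \<sigma> (p + q) = msubst \<sigma> p + msubst \<sigma> q"
proof -
  let ?K = "Poly_Mapping.keys p \<union> Poly_Mapping.keys q"
  have "msubst \<sigma> (p + q) = (\<Sum>m\<in>?K. mconst (Poly_Mapping.lookup (p + q) m) * monom_subst \<sigma> m)"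
    by (rule msubst_eq_sum) (use keys_add[of p q] in auto)
  also have "\<dots> = (\<Sum>m\<in>?K. mconst (Poly_Mapping.lookup p m) * monom_subst \<sigma> m)
                 + (\<Sum>m\<in>?K. mconst (Poly_Mapping.lookup q m) * monom_subst \<sigma> m)"
    by (simp add: lookup_add single_add distrib_right sum.distrib)
  also have "\<dots> = msubst \<sigma> p + msubst \<sigma> q"
    using msubst_eq_sum[of ?K p \<sigma>] msubst_eq_sum[of ?K q \<sigma>] by simp
  finally show ?thesis .
qed

lemma msubst_0 [simp]: "msubst \<sigma> 0 = 0"
  by (simp add: msubst_def)

lemma msubst_single: "msubst \<sigma> (Poly_Mapping.single m c) = mconst c * monom_subst \<sigma> m"
  by (subst msubst_eq_sum[of "{m}"]) auto

lemma msubst_sum: "msubst \<sigma> (sum f A) = (\<Sum>a\<in>A. msubst \<sigma> (f a))"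
  by (induction A rule: infinite_finite_induct) (auto simp: msubst_add)

lemma msubst_uminus: "msubst \<sigma> (- p) = - msubst \<sigma> p"
  using msubst_add[of \<sigma> "- p" p] by (simp add: eq_neg_iff_add_eq_0)

lemma msubst_diff: "msubst \<sigma> (p - q) = msubst \<sigma> p - msubst \<sigma> q"
  using msubst_add[of \<sigma> p "- q"] by (simp add: msubst_uminus)

lemma mult_eq_double_sum:
  fixes p q :: "'a::comm_ring_1 mpoly"
  shows "p * q = (\<Sum>a\<in>Poly_Mapping.keys p. \<Sum>b\<in>Poly_Mapping.keys q.
                  Poly_Mapping.single (a + b) (Poly_Mapping.lookup p a * Poly_Mapping.lookup q b))"
proof -
  have "p * q = (\<Sum>a\<in>Poly_Mapping.keys p. Poly_Mapping.single a (Poly_Mapping.lookup p a)) *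
                (\<Sum>b\<in>Poly_Mapping.keys q. Poly_Mapping.single b (Poly_Mapping.lookup q b))"
    using poly_mapping_sum_keys[of p] poly_mapping_sum_keys[of q] by simp
  also have "\<dots> = (\<Sum>a\<in>Poly_Mapping.keys p. \<Sum>b\<in>Poly_Mapping.keys q.
                  Poly_Mapping.single (a + b) (Poly_Mapping.lookup p a * Poly_Mapping.lookup q b))"
    by (simp add: sum_product mult_single)
  finally show ?thesis .
qed

lemma msubst_mult: "msubst \<sigma> (p * q) = msubst \<sigma> p * msubst \<sigma> q"
proof -
  have "msubst \<sigma> (p * q) = (\<Sum>a\<in>Poly_Mapping.keys p. \<Sum>b\<in>Poly_Mapping.keys q.
           mconst (Poly_Mapping.lookup p a) * monom_subst \<sigma> a
             * (mconst (Poly_Mapping.lookup q b) * monom_subst \<sigma> b))"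
    by (subst mult_eq_double_sum)
      (simp add: msubst_sum msubst_single monom_subst_add mconst_mult ac_simps)
  also have "\<dots> = msubst \<sigma> p * msubst \<sigma> q"
    by (simp add: msubst_def sum_product)
  finally show ?thesis .
qed

lemma msubst_mconst [simp]: "msubst \<sigma> (mconst c) = mconst c"
  by (simp add: msubst_single monom_subst_def)

lemma msubst_mscale: "msubst \<sigma> (mscale c p) = mscale c (msubst \<sigma> p)"
  by (simp add: mscale_eq_const_mult msubst_mult)

lemma msubst_power: "msubst \<sigma> (p ^ k) = msubst \<sigma> p ^ k"
proof (induction k)
  case 0 show ?case using msubst_mconst[of \<sigma> 1] by simp
qed (simp add: msubst_mult)

lemma msubst_prod: "msubst \<sigma> (prod f A) = (\<Prod>a\<in>A. msubst \<sigma> (f a))"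
proof (induction A rule: infinite_finite_induct)
  case (infinite A) show ?case using infinite msubst_mconst[of \<sigma> 1] by simp
next
  case empty show ?case using msubst_mconst[of \<sigma> 1] by simp
qed (simp add: msubst_mult)

lemma msubst_mvar [simp]: "msubst \<sigma> (mvar i) = \<sigma> i"
  by (simp add: mvar_def msubst_single monom_subst_def)

lemma mvar_power: "(mvar i ^ e :: 'a::comm_ring_1 mpoly) = Poly_Mapping.single (Poly_Mapping.single i e) 1"
  unfolding mvar_def by (induction e) (auto simp: mult_single single_add[symmetric])

lemma prod_single_one:
  "(\<Prod>i\<in>A. Poly_Mapping.single (f i) (1 :: 'a::comm_ring_1)) = Poly_Mapping.single (\<Sum>i\<in>A. f i) 1"
  by (induction A rule: infinite_finite_induct) (auto simp: mult_single)

lemma monom_subst_mvar: "monom_subst mvar m = (Poly_Mapping.single m (1 :: 'a::comm_ring_1))"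
proof -
  have "monom_subst mvar m = (\<Prod>i\<in>Poly_Mapping.keys m.
          Poly_Mapping.single (Poly_Mapping.single i (Poly_Mapping.lookup m i)) (1 :: 'a))"
    unfolding monom_subst_def mvar_power ..
  also have "\<dots> = Poly_Mapping.single (\<Sum>i\<in>Poly_Mapping.keys m. Poly_Mapping.single i (Poly_Mapping.lookup m i)) 1"
    by (rule prod_single_one)
  also have "\<dots> = Poly_Mapping.single m 1"
    using poly_mapping_sum_keys[of m] by simp
  finally show ?thesis .
qed

lemma msubst_mvar_id: "msubst mvar p = (p :: 'a::comm_ring_1 mpoly)"
proof -
  have "msubst mvar p = (\<Sum>m\<in>Poly_Mapping.keys p. Poly_Mapping.single m (Poly_Mapping.lookup p m))"
    by (simp add: msubst_def monom_subst_mvar mult_single)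
  also have "\<dots> = p" using poly_mapping_sum_keys[of p] by simp
  finally show ?thesis .
qed

lemma msubst_msubst: "msubst \<sigma> (msubst \<tau> p) = msubst (\<lambda>i. msubst \<sigma> (\<tau> i)) p"
proof -
  have "msubst \<sigma> (msubst \<tau> p)
      = (\<Sum>m\<in>Poly_Mapping.keys p. msubst \<sigma> (mconst (Poly_Mapping.lookup p m) * monom_subst \<tau> m))"
    unfolding msubst_def[of \<tau>] by (rule msubst_sum)
  also have "\<dots> = (\<Sum>m\<in>Poly_Mapping.keys p.
      mconst (Poly_Mapping.lookup p m) * monom_subst (\<lambda>i. msubst \<sigma> (\<tau> i)) m)"
    by (simp add: msubst_mult monom_subst_def msubst_prod msubst_power)
  finally show ?thesis by (simp add: msubst_def)
qed

lemma msubst_cong: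
  assumes "in_vars n p" "\<And>i. i < n \<Longrightarrow> \<sigma> i = \<tau> i"
  shows "msubst \<sigma> p = msubst \<tau> p"
  unfolding msubst_def monom_subst_def
  using assms unfolding in_vars_def
  by (intro sum.cong refl arg_cong2[where f="(*)"] prod.cong) (metis lessThan_iff subsetD)

lemma in_vars_msubst:
  assumes "in_vars N p" "\<And>i. i < N \<Longrightarrow> in_vars n (\<sigma> i)"
  shows "in_vars n (msubst \<sigma> p)"
  unfolding msubst_def monom_subst_def using assms unfolding in_vars_def[of N]
  by (auto intro!: in_vars_sum in_vars_mult in_vars_const in_vars_prod in_vars_power)

lemma homog_monom_subst:
  assumes "Poly_Mapping.keys m \<subseteq> {..<N}" "\<And>i. i < N \<Longrightarrow> homog 1 (\<sigma> i)"
  shows "homog (mdeg m) (mconst c * monom_subst \<sigma> m)"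
proof -
  have "homog (mdeg m) (monom_subst \<sigma> m)"
    unfolding monom_subst_def mdeg_def using assms
    by (intro homog_prod finite_keys homog_power) (meson assms lessThan_iff subsetD)
  then show ?thesis using homog_mult[OF homog_single[of 0]] by fastforce
qed

lemma gpart_msubst:
  assumes "p \<in> gpart N j" "\<And>i. i < N \<Longrightarrow> \<sigma> i \<in> gpart n 1"
  shows "msubst \<sigma> p \<in> gpart n j"
proof -
  have "homog j (msubst \<sigma> p)"
    unfolding msubst_def
  proof (intro homog_sum)
    fix m assume "m \<in> Poly_Mapping.keys p"
    then have "Poly_Mapping.keys m \<subseteq> {..<N}" "mdeg m = j"
      using assms(1) by (auto simp: gpart_def in_vars_def homog_def)
    then show "homog j (mconst (Poly_Mapping.lookup p m) * monom_subst \<sigma> m)"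
      using homog_monom_subst[of m N \<sigma>] assms(2) by (auto simp: gpart_def)
  qed
  moreover have "in_vars n (msubst \<sigma> p)"
    using assms by (intro in_vars_msubst[of N]) (auto simp: gpart_def)
  ultimately show ?thesis by (simp add: gpart_def)
qed

section \<open>Homogeneous components\<close>

lift_definition hcomp :: "nat \<Rightarrow> 'a::zero mpoly \<Rightarrow> 'a mpoly" is
  "\<lambda>j p m. if mdeg m = j then p m else 0"
  by (rule finite_subset[rotated]) auto

lemma lookup_hcomp:
  "Poly_Mapping.lookup (hcomp j p) m = (if mdeg m = j then Poly_Mapping.lookup p m else 0)"
  by transfer simp

lemma homog_hcomp: "homog j (hcomp j p)"
  by (auto simp: homog_def in_keys_iff lookup_hcomp split: if_splits)

lemma gpart_hcomp: "in_vars n p \<Longrightarrow> hcomp j p \<in> gpart n j"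
  by (auto simp: gpart_def in_vars_def homog_hcomp in_keys_iff lookup_hcomp split: if_splits)

lemma hcomp_0 [simp]: "hcomp j 0 = 0"
  by (rule poly_mapping_eqI) (simp add: lookup_hcomp)

lemma hcomp_add: "hcomp j (p + q) = hcomp j p + hcomp j (q :: 'a::comm_monoid_add mpoly)"
  by (rule poly_mapping_eqI) (simp add: lookup_hcomp lookup_add)

lemma hcomp_sum: "hcomp j (sum f A) = (\<Sum>a\<in>A. hcomp j (f a :: 'a::comm_monoid_add mpoly))"
  by (induction A rule: infinite_finite_induct) (auto simp: hcomp_add)

lemma hcomp_homog: "homog j p \<Longrightarrow> hcomp j p = p"
  by (rule poly_mapping_eqI) (auto simp: lookup_hcomp homog_def in_keys_iff)

lemma hcomp_eq_0: "p \<in> supported_in {m. mdeg m \<noteq> j} \<Longrightarrow> hcomp j p = 0"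
  by (rule poly_mapping_eqI) (auto simp: lookup_hcomp supported_in_def in_keys_iff)

lemma hcomp_homog_other: "homog e p \<Longrightarrow> e \<noteq> j \<Longrightarrow> hcomp j p = 0"
  by (rule hcomp_eq_0) (auto simp: supported_in_def homog_def)

lemma hcomp_single:
  "hcomp j (Poly_Mapping.single m c) = (if mdeg m = j then Poly_Mapping.single m c else 0)"
  by (rule poly_mapping_eqI) (simp add: lookup_hcomp lookup_single when_def)

lemma hcomp_mult_homog:
  fixes p q :: "'a::comm_ring_1 mpoly"
  assumes "homog e q"
  shows "hcomp j (p * q) = (if e \<le> j then hcomp (j - e) p * q else 0)"
proof (cases "e \<le> j")
  case True
  have q: "q \<in> supported_in {m. mdeg m = e}" using assms by (simp add: homog_iff_supported_in)
  have "(p - hcomp (j - e) p) \<in> supported_in {m. mdeg m \<noteq> j - e}"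
    by (auto simp: supported_in_def in_keys_iff lookup_minus lookup_hcomp)
  then have "hcomp j ((p - hcomp (j - e) p) * q) = 0"
    using True by (intro hcomp_eq_0 supported_in_mult[OF _ q]) (auto simp: mdeg_add)
  moreover have "homog (j - e + e) (hcomp (j - e) p * q)"
    by (rule homog_mult[OF homog_hcomp assms])
  ultimately show ?thesis
    using True hcomp_add[of j "(p - hcomp (j - e) p) * q" "hcomp (j - e) p * q"]
    by (simp add: hcomp_homog algebra_simps)
next
  case False
  have "p * q \<in> supported_in {m. mdeg m \<noteq> j}"
    using False assms
    by (intro supported_in_mult[of p UNIV q "{m. mdeg m = e}"]) (auto simp: supported_in_def homog_def mdeg_add)
  then show ?thesis using False by (simp add: hcomp_eq_0)
qed

lemma msubst_hcomp:
  assumes "in_vars N p" "\<And>i. i < N \<Longrightarrow> homog 1 (\<sigma> i)"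
  shows "msubst \<sigma> (hcomp j p) = hcomp j (msubst \<sigma> p)"
proof -
  let ?t = "\<lambda>m. mconst (Poly_Mapping.lookup p m) * monom_subst \<sigma> m"
  have homog_t: "homog (mdeg m) (?t m)" if "m \<in> Poly_Mapping.keys p" for m
    using homog_monom_subst[of m N \<sigma>] assms that by (auto simp: in_vars_def)
  have "hcomp j p = (\<Sum>m\<in>Poly_Mapping.keys p. hcomp j (Poly_Mapping.single m (Poly_Mapping.lookup p m)))"
    by (subst poly_mapping_sum_keys) (simp add: hcomp_sum)
  then have "msubst \<sigma> (hcomp j p) = (\<Sum>m\<in>Poly_Mapping.keys p. if mdeg m = j then ?t m else 0)"
    by (simp add: hcomp_single msubst_sum msubst_single if_distrib cong: if_cong)
  also have "\<dots> = (\<Sum>m\<in>Poly_Mapping.keys p. hcomp j (?t m))"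
  proof (intro sum.cong refl)
    fix m assume m: "m \<in> Poly_Mapping.keys p"
    show "(if mdeg m = j then ?t m else 0) = hcomp j (?t m)"
      using homog_t[OF m] by (auto simp: hcomp_homog hcomp_homog_other)
  qed
  also have "\<dots> = hcomp j (msubst \<sigma> p)"
    by (simp add: msubst_def hcomp_sum)
  finally show ?thesis .
qed

section \<open>Dimension counting\<close>

context vector_space
begin

lemma dim_singleton_0: "dim {0} = 0"
  using dim_eq_card[of "{}" "{0}"] by (simp add: independent_empty)

lemma dim_mono_finite_span:
  assumes "A \<subseteq> B" "B \<subseteq> span F" "finite F"
  shows "dim A \<le> dim B"
proof -
  obtain C where C: "C \<subseteq> B" "independent C" "B \<subseteq> span C" "card C = dim B"
    using basis_exists by blast
  moreover have "finite C"
    using independent_span_bound[OF assms(3) C(2)] C(1) assms(2) by auto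
  ultimately show ?thesis using dim_le_card[of A C] assms(1) by auto
qed

lemma span_inter_span_diff:
  assumes "independent B" "finite B" "A \<subseteq> B" "x \<in> span A" "x \<in> span (B - A)"
  shows "x = 0"
proof -
  have fin: "finite A" "finite (B - A)" using assms finite_subset by auto
  obtain u where u: "x = (\<Sum>v\<in>A. scale (u v) v)" using assms(4) span_finite[OF fin(1)] by auto
  obtain w where w: "x = (\<Sum>v\<in>B - A. scale (w v) v)" using assms(5) span_finite[OF fin(2)] by auto
  define r where "r v = (if v \<in> A then u v else - w v)" for v
  have "(\<Sum>v\<in>B. scale (r v) v) = (\<Sum>v\<in>A. scale (r v) v) + (\<Sum>v\<in>B - A. scale (r v) v)"
    using sum.subset_diff[OF assms(3,2)] by (simp add: add.commute)
  also have "\<dots> = (\<Sum>v\<in>A. scale (u v) v) + (\<Sum>v\<in>B - A. scale (- w v) v)"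
    by (intro arg_cong2[where f="(+)"] sum.cong refl) (auto simp: r_def)
  also have "\<dots> = 0"
    unfolding scale_minus_left sum_negf u[symmetric] w[symmetric] by simp
  finally have "\<forall>v\<in>B. r v = 0" using assms(1) dependent_finite[OF assms(2)] by blast
  then have "\<forall>v\<in>A. u v = 0" using assms(3) unfolding r_def by (metis subsetD)
  then show ?thesis using u by simp
qed

text \<open>Only U, not the ambient space, needs to be finite dimensional.\<close>
lemma rank_nullity_finite_span:
  assumes U: "subspace U" "U \<subseteq> span F" "finite F" and lin: "Vector_Spaces.linear scale scale T"
  shows "dim (T ` U) + dim {x\<in>U. T x = 0} = dim U"
proof -
  interpret L: Vector_Spaces.linear scale scale T by (rule lin)
  let ?Z = "{x\<in>U. T x = 0}"
  obtain B0 where B0: "B0 \<subseteq> ?Z" "independent B0" "?Z \<subseteq> span B0" "card B0 = dim ?Z"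
    using basis_exists by blast
  obtain B where B: "B0 \<subseteq> B" "B \<subseteq> U" "independent B" "U \<subseteq> span B"
    using maximal_independent_subset_extend[of B0 U] B0(1,2) by blast
  have fin_B: "finite B" using independent_span_bound[OF U(3) B(3)] B(2) U(2) by (meson order_trans)
  define C where "C = B - B0"
  have card_B: "card B = card B0 + card C"
    unfolding C_def using card_Diff_subset[OF finite_subset[OF B(1) fin_B] B(1)] card_mono[OF fin_B B(1)]
    by simp
  have span_C: "span C \<subseteq> U"
    using B(2) U(1) unfolding C_def by (meson Diff_subset span_minimal order_trans)
  have inj: "inj_on T (span C)"
    unfolding L.inj_on_iff_eq_0[OF subspace_span]
  proof (intro ballI impI)
    fix x assume x: "x \<in> span C" "T x = 0"
    then have "x \<in> span B0" using span_C B0(3) by auto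
    then show "x = 0" using span_inter_span_diff[OF B(3) fin_B B(1)] x(1) unfolding C_def by auto
  qed
  have "T ` U \<subseteq> span (T ` C)"
  proof
    fix y assume "y \<in> T ` U"
    then have "y \<in> T ` span B" using B(4) by auto
    also have "\<dots> = span (T ` C \<union> T ` B0)"
      unfolding L.span_image C_def image_Un[symmetric] using B(1) by (simp add: Un_absorb2)
    also have "\<dots> \<subseteq> span (T ` C)"
      using B0(1) by (intro span_minimal subspace_span Un_least span_superset) (auto simp: span_zero)
    finally show "y \<in> span (T ` C)" .
  qed
  moreover have "T ` C \<subseteq> T ` U" using B(2) unfolding C_def by auto
  moreover have "independent (T ` C)"
    using L.independent_injective_image[OF independent_mono[OF B(3)] inj] unfolding C_def by blast
  ultimately have "card (T ` C) = dim (T ` U)"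
    using basis_card_eq_dim[of "T ` C" "T ` U"] by blast
  moreover have "card (T ` C) = card C"
    by (rule card_image, rule inj_on_subset[OF inj span_superset])
  ultimately show ?thesis using card_B basis_card_eq_dim[OF B(2,4,3)] B0(4) by simp
qed

end

interpretation V: vector_space "mscale :: 'a::field \<Rightarrow> 'a mpoly \<Rightarrow> 'a mpoly"
  by (rule vector_space_mscale)

lemma linear_mscaleI:
  assumes "\<And>x y. T (x + y) = T x + T y" "\<And>c x. T (mscale c x) = mscale c (T x)"
  shows "Vector_Spaces.linear mscale mscale (T :: 'a::field mpoly \<Rightarrow> 'a mpoly)"
  using assms vector_space_mscale by (simp add: Vector_Spaces.linear_iff)

lemma linear_msubst: "Vector_Spaces.linear mscale mscale (msubst (\<sigma> :: nat \<Rightarrow> 'a::field mpoly))"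
  by (rule linear_mscaleI) (auto simp: msubst_add msubst_mscale)

lemma linear_mult_left: "Vector_Spaces.linear mscale mscale (\<lambda>x. (l :: 'a::field mpoly) * x)"
  by (rule linear_mscaleI) (simp_all add: mscale_eq_const_mult distrib_left mult.left_commute)

abbreviation mmonom :: "(nat \<Rightarrow>\<^sub>0 nat) \<Rightarrow> 'a::comm_ring_1 mpoly" where
  "mmonom m \<equiv> Poly_Mapping.single m 1"

lemma in_span_monomials:
  assumes "Poly_Mapping.keys p \<subseteq> A"
  shows "(p :: 'a::field mpoly) \<in> V.span (mmonom ` A)"
proof -
  have "p = (\<Sum>m\<in>Poly_Mapping.keys p. mscale (Poly_Mapping.lookup p m) (mmonom m))"
    by (subst poly_mapping_sum_keys) (simp add: mscale_eq_const_mult mult_single)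
  also have "\<dots> \<in> V.span (mmonom ` A)"
    using assms by (intro V.span_sum V.span_scale V.span_base) auto
  finally show ?thesis .
qed

lemma independent_monomials: "V.independent (mmonom ` A :: 'a::field mpoly set)"
  unfolding V.independent_explicit_finite_subsets
proof (intro allI impI ballI)
  fix S u v
  assume S: "S \<subseteq> mmonom ` A" "finite S" and sum0: "(\<Sum>v\<in>S. mscale (u v) v) = (0 :: 'a mpoly)"
    and v: "v \<in> S"
  obtain m where m: "v = mmonom m" using S v by auto
  have "0 = Poly_Mapping.lookup (\<Sum>v\<in>S. mscale (u v) v) m" using sum0 by simp
  also have "\<dots> = (\<Sum>w\<in>S. u w * Poly_Mapping.lookup w m)"
    by (simp add: lookup_sum mscale_def Poly_Mapping.map.rep_eq when_def) (metis mult_zero_right)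
  also have "\<dots> = (\<Sum>w\<in>{v}. u w * Poly_Mapping.lookup w m)"
  proof (rule sum.mono_neutral_right)
    show "\<forall>w\<in>S - {v}. u w * Poly_Mapping.lookup w m = 0"
      using S m by (auto simp: lookup_single)
  qed (use S v in auto)
  also have "\<dots> = u v" using m by simp
  finally show "u v = 0" by simp
qed

lemma dim_monomials: "V.dim (mmonom ` A :: 'a::field mpoly set) = card A"
proof -
  have "inj_on (mmonom :: _ \<Rightarrow> 'a mpoly) A"
    by (rule inj_onI) (metis lookup_single_eq lookup_single_not_eq zero_neq_one)
  then show ?thesis by (simp add: V.dim_eq_card_independent[OF independent_monomials] card_image)
qed

lemma subspace_gpart: "V.subspace (gpart n j :: 'a::field mpoly set)"
  by (auto simp: V.subspace_def gpart_add gpart_mscale)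

lemma gpart_eq_span: "(gpart N j :: 'a::field mpoly set) = V.span (mmonom ` monoms N j)"
proof
  show "gpart N j \<subseteq> V.span (mmonom ` monoms N j)"
    by (auto intro!: in_span_monomials simp: gpart_eq_supported_in supported_in_def)
  show "V.span (mmonom ` monoms N j) \<subseteq> gpart N j"
    by (intro V.span_minimal subspace_gpart) (auto simp: monoms_def intro: gpart_single)
qed

lemma dim_gpart: "V.dim (gpart N j :: 'a::field mpoly set) = card (monoms N j)"
  by (simp add: gpart_eq_span dim_monomials)

lemma rank_nullity_gpart:
  "V.subspace U \<Longrightarrow> U \<subseteq> gpart N j \<Longrightarrow> Vector_Spaces.linear mscale mscale T \<Longrightarrow>
    V.dim (T ` U) + V.dim {x\<in>U. T x = 0} = V.dim (U :: 'a::field mpoly set)"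
  by (rule V.rank_nullity_finite_span[of _ "mmonom ` monoms N j"])
    (auto simp: gpart_eq_span finite_monoms)

lemma dim_mono_gpart:
  "A \<subseteq> B \<Longrightarrow> B \<subseteq> gpart N j \<Longrightarrow> V.dim A \<le> V.dim (B :: 'a::field mpoly set)"
  by (rule V.dim_mono_finite_span[of _ _ "mmonom ` monoms N j"]) (auto simp: gpart_eq_span finite_monoms)

lemma ideal_genI: "a = (\<Sum>i<m. g i * F i) \<Longrightarrow> \<forall>i<m. in_vars n (g i) \<Longrightarrow> a \<in> ideal_gen n F m"
  unfolding ideal_gen_def by blast

lemma ideal_genE:
  assumes "a \<in> ideal_gen n F m"
  obtains g where "a = (\<Sum>i<m. g i * F i)" "\<forall>i<m. in_vars n (g i)"
  using assms unfolding ideal_gen_def by blast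

lemma ideal_gen_0: "0 \<in> ideal_gen n F m"
  by (rule ideal_genI[of _ "\<lambda>_. 0"]) simp_all

lemma ideal_gen_add: "a \<in> ideal_gen n F m \<Longrightarrow> b \<in> ideal_gen n F m \<Longrightarrow> a + b \<in> ideal_gen n F m"
proof (elim ideal_genE)
  fix g h assume "a = (\<Sum>i<m. g i * F i)" "\<forall>i<m. in_vars n (g i)"
    "b = (\<Sum>i<m. h i * F i)" "\<forall>i<m. in_vars n (h i)"
  then show ?thesis
    by (intro ideal_genI[of _ "\<lambda>i. g i + h i"]) (simp_all add: sum.distrib distrib_right in_vars_add)
qed

lemma ideal_gen_mult: "a \<in> ideal_gen n F m \<Longrightarrow> in_vars n h \<Longrightarrow> h * a \<in> ideal_gen n F m"
proof (elim ideal_genE)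
  fix g assume "a = (\<Sum>i<m. g i * F i)" "\<forall>i<m. in_vars n (g i)" "in_vars n h"
  then show ?thesis
    by (intro ideal_genI[of _ "\<lambda>i. h * g i"]) (simp_all add: sum_distrib_left mult.assoc in_vars_mult)
qed

lemma ideal_gen_sum: "(\<And>i. i \<in> A \<Longrightarrow> f i \<in> ideal_gen n F m) \<Longrightarrow> sum f A \<in> ideal_gen n F m"
  by (induction A rule: infinite_finite_induct) (auto simp: ideal_gen_0 ideal_gen_add)

lemma mult_gen_in_ideal_gen: "i < m \<Longrightarrow> in_vars n g \<Longrightarrow> g * F i \<in> ideal_gen n F m"
  by (rule ideal_genI[of _ "\<lambda>k. if k = i then g else 0"])
    (simp_all add: if_distrib[of "\<lambda>x. x * _"] cong: if_cong)

lemma subspace_ideal_gen: "V.subspace (ideal_gen n F m)"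
  by (auto simp: V.subspace_def ideal_gen_0 ideal_gen_add mscale_eq_const_mult ideal_gen_mult in_vars_const)

lemma hcomp_ideal_gen:
  assumes "\<And>i. i < m \<Longrightarrow> homog (e i) (F i)" "u \<in> ideal_gen n F m"
  shows "hcomp j u \<in> ideal_gen n F m"
proof -
  obtain g where g: "u = (\<Sum>i<m. g i * F i)" "\<forall>i<m. in_vars n (g i)"
    using assms(2) by (rule ideal_genE)
  have "hcomp j (g i * F i) \<in> ideal_gen n F m" if "i < m" for i
    using that assms(1)[of i] g(2)
    by (auto simp: hcomp_mult_homog ideal_gen_0 gpart_in_vars[OF gpart_hcomp] intro!: mult_gen_in_ideal_gen)
  then show ?thesis unfolding g(1) hcomp_sum by (auto intro: ideal_gen_sum)
qed

section \<open>Monomial complete intersections\<close>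

abbreviation mci :: "nat \<Rightarrow> (nat \<Rightarrow> nat) \<Rightarrow> 'a::field mpoly set" where
  "mci N d \<equiv> ideal_gen N (\<lambda>i. mvar i ^ d i) N"

definition standard_monoms :: "nat \<Rightarrow> (nat \<Rightarrow> nat) \<Rightarrow> nat \<Rightarrow> (nat \<Rightarrow>\<^sub>0 nat) set" where
  "standard_monoms N d j =
    {m. Poly_Mapping.keys m \<subseteq> {..<N} \<and> mdeg m = j \<and> (\<forall>i<N. Poly_Mapping.lookup m i < d i)}"

lemma keys_mci:
  assumes "p \<in> mci N d"
  shows "Poly_Mapping.keys p \<subseteq> {m. \<exists>i<N. d i \<le> Poly_Mapping.lookup m i}"
proof -
  obtain g where g: "p = (\<Sum>i<N. g i * mvar i ^ d i)"
    using assms by (rule ideal_genE)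
  have "g i * mvar i ^ d i \<in> supported_in {m. \<exists>i<N. d i \<le> Poly_Mapping.lookup m i}" if "i < N" for i
    unfolding mvar_power
    by (rule supported_in_mult[of _ UNIV _ "{Poly_Mapping.single i (d i)}"])
      (use that in \<open>auto simp: supported_in_def lookup_add\<close>)
  then have "p \<in> supported_in {m. \<exists>i<N. d i \<le> Poly_Mapping.lookup m i}"
    unfolding g by (auto intro: supported_in_sum)
  then show ?thesis by (simp add: supported_in_def)
qed

lemma one_notin_mci:
  assumes "\<forall>i<N. d i > 0"
  shows "(1 :: 'a::field mpoly) \<notin> mci N d"
proof
  assume "(1 :: 'a mpoly) \<in> mci N d"
  from keys_mci[OF this] obtain i where "i < N" "d i = 0" by auto
  with assms show False by auto
qed

lemma monomial_in_mci:
  assumes "Poly_Mapping.keys m \<subseteq> {..<N}" "i < N" "d i \<le> Poly_Mapping.lookup m i"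
  shows "(mmonom m :: 'a::field mpoly) \<in> mci N d"
proof -
  let ?m' = "m - Poly_Mapping.single i (d i)"
  have "m = ?m' + Poly_Mapping.single i (d i)"
    using assms(3) by (intro poly_mapping_eqI) (auto simp: lookup_add lookup_minus lookup_single when_def)
  then have "(mmonom m :: 'a mpoly) = mmonom ?m' * mvar i ^ d i"
    by (metis mvar_power mult_single mult_1)
  moreover have "Poly_Mapping.keys ?m' \<subseteq> Poly_Mapping.keys m"
    by (auto simp: in_keys_iff lookup_minus)
  then have "in_vars N (mmonom ?m' :: 'a mpoly)" using assms(1) by (auto simp: in_vars_def)
  note mult_gen_in_ideal_gen[OF assms(2) this, of "\<lambda>i. mvar i ^ d i"]
  ultimately show ?thesis by simp
qed

lemma mci_inter_gpart:
  "(mci N d :: 'a::field mpoly set) \<inter> gpart N j = V.span (mmonom ` (monoms N j - standard_monoms N d j))"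
  (is "_ = V.span (mmonom ` ?B)")
proof
  show "mci N d \<inter> gpart N j \<subseteq> V.span (mmonom ` ?B)"
  proof
    fix p assume p: "p \<in> mci N d \<inter> gpart N j"
    have "Poly_Mapping.keys p \<subseteq> monoms N j"
      using p by (simp add: gpart_eq_supported_in supported_in_def)
    moreover note keys_mci[of p N d]
    ultimately have "Poly_Mapping.keys p \<subseteq> ?B"
      using p by (fastforce simp: standard_monoms_def not_less)
    then show "p \<in> V.span (mmonom ` ?B)" by (rule in_span_monomials)
  qed
  show "V.span (mmonom ` ?B) \<subseteq> mci N d \<inter> gpart N j"
  proof (intro V.span_minimal V.subspace_inter subspace_ideal_gen subspace_gpart image_subsetI)
    fix m assume "m \<in> ?B"
    then show "mmonom m \<in> mci N d \<inter> gpart N j"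
      using monomial_in_mci[of m N] gpart_single[of m N 1]
      by (auto simp: standard_monoms_def monoms_def not_less)
  qed
qed

lemma hilb_fun_mci: "hilb_fun N (mci N d :: 'a::field mpoly set) j = card (standard_monoms N d j)"
proof -
  have "standard_monoms N d j \<subseteq> monoms N j" by (auto simp: standard_monoms_def monoms_def)
  then show ?thesis
    using card_mono[OF finite_monoms]
    by (simp add: hilb_fun_def kdim_def mci_inter_gpart dim_gpart dim_monomials
        card_Diff_subset finite_subset[OF _ finite_monoms])
qed

lemma standard_monoms_0: "standard_monoms 0 d j = (if j = 0 then {0} else {})"
  by (auto simp: standard_monoms_def)

lemma standard_monoms_Suc:
  "standard_monoms (Suc N) d j =
    (\<Union>e\<in>{e. e \<le> j \<and> e < d N}. (\<lambda>m. m + Poly_Mapping.single N e) ` standard_monoms N d (j - e))"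
proof (intro equalityI subsetI)
  fix m assume m: "m \<in> standard_monoms (Suc N) d j"
  define e where "e = Poly_Mapping.lookup m N"
  define m' where "m' = m - Poly_Mapping.single N e"
  have me: "m = m' + Poly_Mapping.single N e"
    unfolding m'_def e_def by (intro poly_mapping_eqI) (auto simp: lookup_add lookup_minus lookup_single when_def)
  have lk: "Poly_Mapping.lookup m' i = (if i = N then 0 else Poly_Mapping.lookup m i)" for i
    unfolding m'_def e_def by (auto simp: lookup_minus lookup_single when_def)
  have "e \<le> j" using lookup_le_mdeg[of m N] m by (simp add: e_def standard_monoms_def)
  moreover have "e < d N" using m by (simp add: e_def standard_monoms_def)
  moreover have "m' \<in> standard_monoms N d (j - e)"
  proof -
    have "Poly_Mapping.keys m' \<subseteq> {..<N}"
    proof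
      fix i assume "i \<in> Poly_Mapping.keys m'"
      then have "i \<noteq> N" "i \<in> Poly_Mapping.keys m" by (auto simp: in_keys_iff lk split: if_splits)
      then show "i \<in> {..<N}" using m by (auto simp: standard_monoms_def)
    qed
    moreover have "mdeg m = mdeg m' + e" using me mdeg_add[of m' "Poly_Mapping.single N e"] by simp
    ultimately show ?thesis using m by (auto simp: standard_monoms_def lk)
  qed
  ultimately show "m \<in> (\<Union>e\<in>{e. e \<le> j \<and> e < d N}.
      (\<lambda>m. m + Poly_Mapping.single N e) ` standard_monoms N d (j - e))"
    using me by blast
next
  fix m assume "m \<in> (\<Union>e\<in>{e. e \<le> j \<and> e < d N}.
      (\<lambda>m. m + Poly_Mapping.single N e) ` standard_monoms N d (j - e))"
  then obtain e m' where e: "e \<le> j" "e < d N" and m': "m' \<in> standard_monoms N d (j - e)"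
    and me: "m = m' + Poly_Mapping.single N e"
    by blast
  have "Poly_Mapping.lookup m' N = 0" using m' by (auto simp: standard_monoms_def in_keys_iff)
  then show "m \<in> standard_monoms (Suc N) d j"
    using m' e unfolding me
    by (auto simp: standard_monoms_def keys_add_nat mdeg_add lookup_add lookup_single less_Suc_eq)
qed

lemma finite_standard_monoms: "finite (standard_monoms N d j)"
  using finite_monoms[of N j] by (rule finite_subset[rotated]) (auto simp: standard_monoms_def monoms_def)

lemma card_standard_monoms_Suc:
  "card (standard_monoms (Suc N) d j) = (\<Sum>e\<in>{e. e \<le> j \<and> e < d N}. card (standard_monoms N d (j - e)))"
proof -
  let ?shift = "\<lambda>(e :: nat) m. m + Poly_Mapping.single N e"
  have lookup_N: "Poly_Mapping.lookup (?shift e m) N = e" if "m \<in> standard_monoms N d k" for e m k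
    using that by (auto simp: standard_monoms_def in_keys_iff lookup_add)
  have disjoint: "?shift e ` standard_monoms N d (j - e) \<inter> ?shift e' ` standard_monoms N d (j - e') = {}"
    if "e \<noteq> e'" for e e'
  proof (rule ccontr)
    assume "\<not> ?thesis"
    then obtain a b where "a \<in> standard_monoms N d (j - e)" "b \<in> standard_monoms N d (j - e')"
      "?shift e a = ?shift e' b" by blast
    then show False using lookup_N[of a _ e] lookup_N[of b _ e'] that by metis
  qed
  have "card (standard_monoms (Suc N) d j)
      = (\<Sum>e\<in>{e. e \<le> j \<and> e < d N}. card (?shift e ` standard_monoms N d (j - e)))"
    unfolding standard_monoms_Suc
    by (rule card_UN_disjoint) (simp_all add: finite_standard_monoms disjoint)
  also have "\<dots> = (\<Sum>e\<in>{e. e \<le> j \<and> e < d N}. card (standard_monoms N d (j - e)))"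
    by (intro sum.cong refl card_image inj_onI) (simp add: poly_mapping_eq_iff fun_eq_iff lookup_add)
  finally show ?thesis .
qed

lemma standard_monoms_fps:
  "Abs_fps (\<lambda>j. int (card (standard_monoms N d j))) = (\<Prod>i<N. (\<Sum>e<d i. fps_X ^ e :: int fps))"
proof (induction N)
  case 0
  show ?case by (simp add: fps_eq_iff standard_monoms_0)
next
  case (Suc N)
  let ?A = "Abs_fps (\<lambda>j. int (card (standard_monoms N d j)))"
  have "fps_nth (?A * (\<Sum>e<d N. fps_X ^ e)) j = int (card (standard_monoms (Suc N) d j))" for j
  proof -
    have "fps_nth (?A * (\<Sum>e<d N. fps_X ^ e)) j
        = (\<Sum>i=0..j. int (card (standard_monoms N d i)) * (if j - i < d N then 1 else 0))"
      by (simp add: fps_mult_nth fps_sum_nth)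
    also have "\<dots> = (\<Sum>e=0..j. int (card (standard_monoms N d (j - e))) * (if e < d N then 1 else 0))"
      by (rule sum.reindex_bij_witness[of _ "\<lambda>e. j - e" "\<lambda>i. j - i"]) auto
    also have "\<dots> = (\<Sum>e=0..j. if e < d N then int (card (standard_monoms N d (j - e))) else 0)"
      by (intro sum.cong) auto
    also have "\<dots> = (\<Sum>e\<in>{e \<in> {0..j}. e < d N}. int (card (standard_monoms N d (j - e))))"
      by (rule sum.inter_filter[symmetric]) simp
    also have "{e \<in> {0..j}. e < d N} = {e. e \<le> j \<and> e < d N}" by auto
    finally show ?thesis by (simp add: card_standard_monoms_Suc)
  qed
  then show ?case using Suc by (simp add: fps_eq_iff)
qed

lemma geometric_sum_fps: "(\<Sum>e<d. fps_X ^ e :: int fps) = (1 - fps_X ^ d) * geom_fps"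
proof -
  have "(\<Sum>e<d. fps_X ^ e :: int fps) * (1 - fps_X) = 1 - fps_X ^ d"
  proof (induction d)
    case (Suc d)
    have "(\<Sum>e<Suc d. fps_X ^ e :: int fps) * (1 - fps_X)
        = (\<Sum>e<d. fps_X ^ e) * (1 - fps_X) + fps_X ^ d * (1 - fps_X)"
      by (simp add: distrib_right)
    also have "\<dots> = 1 - fps_X ^ Suc d" unfolding Suc by (simp add: algebra_simps)
    finally show ?case .
  qed simp
  then have "(\<Sum>e<d. fps_X ^ e :: int fps) * ((1 - fps_X) * geom_fps) = (1 - fps_X ^ d) * geom_fps"
    by (simp add: mult.assoc[symmetric])
  then show ?thesis using geom_fps_inverse by (simp add: mult.commute)
qed

lemma hilb_fun_mci_coeff:
  "int (hilb_fun N (mci N d :: 'a::field mpoly set) j) = fps_nth ((\<Prod>i<N. 1 - fps_X ^ d i) * geom_fps ^ N) j"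
proof -
  have "(\<Prod>i<N. (\<Sum>e<d i. fps_X ^ e :: int fps)) = (\<Prod>i<N. 1 - fps_X ^ d i) * geom_fps ^ N"
    by (simp add: geometric_sum_fps prod.distrib)
  then show ?thesis using standard_monoms_fps[of N d] by (metis fps_nth_Abs_fps hilb_fun_mci)
qed

section \<open>Congruences modulo a linear form\<close>

definition cong_mod :: "nat \<Rightarrow> 'a::field mpoly \<Rightarrow> 'a mpoly \<Rightarrow> 'a mpoly \<Rightarrow> bool" where
  "cong_mod N l a b \<longleftrightarrow> (\<exists>q. in_vars N q \<and> a - b = l * q)"

lemma cong_mod_refl: "cong_mod N l a a"
  unfolding cong_mod_def by (rule exI[of _ 0]) simp

lemma cong_mod_add: "cong_mod N l a b \<Longrightarrow> cong_mod N l a' b' \<Longrightarrow> cong_mod N l (a + a') (b + b')"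
  unfolding cong_mod_def
proof (elim exE conjE)
  fix q q' assume "in_vars N q" "a - b = l * q" "in_vars N q'" "a' - b' = l * q'"
  then show "\<exists>q. in_vars N q \<and> a + a' - (b + b') = l * q"
    by (intro exI[of _ "q + q'"]) (auto simp: in_vars_add algebra_simps)
qed

lemma cong_mod_mult:
  assumes "cong_mod N l a b" "cong_mod N l a' b'" "in_vars N a" "in_vars N b'"
  shows "cong_mod N l (a * a') (b * b')"
proof -
  obtain q q' where q: "in_vars N q" "a - b = l * q" and q': "in_vars N q'" "a' - b' = l * q'"
    using assms(1,2) unfolding cong_mod_def by blast
  have "a * a' - b * b' = a * (a' - b') + (a - b) * b'" by (simp add: algebra_simps)
  also have "\<dots> = l * (a * q' + q * b')" using q q' by (simp add: algebra_simps)
  finally show ?thesis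
    using assms(3,4) q q' unfolding cong_mod_def by (blast intro: in_vars_add in_vars_mult)
qed

lemma cong_mod_power:
  assumes "cong_mod N l a b" "in_vars N a" "in_vars N b"
  shows "cong_mod N l (a ^ k) (b ^ k)"
proof (induction k)
  case 0 show ?case by (simp add: cong_mod_refl)
next
  case (Suc k)
  then show ?case using cong_mod_mult[OF assms(1) Suc assms(2) in_vars_power[OF assms(3)]] by simp
qed

lemma cong_mod_prod:
  assumes "\<And>i. i \<in> A \<Longrightarrow> cong_mod N l (f i) (g i)"
    and "\<And>i. i \<in> A \<Longrightarrow> in_vars N (f i)" "\<And>i. i \<in> A \<Longrightarrow> in_vars N (g i)"
  shows "cong_mod N l (prod f A) (prod g A)"
  using assms
proof (induction A rule: infinite_finite_induct)
  case (insert x F)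
  then show ?case by (simp add: cong_mod_mult in_vars_prod)
qed (simp_all add: cong_mod_refl)

lemma cong_mod_sum:
  "(\<And>i. i \<in> A \<Longrightarrow> cong_mod N l (f i) (g i)) \<Longrightarrow> cong_mod N l (sum f A) (sum g A)"
proof (induction A rule: infinite_finite_induct)
  case (insert x F)
  then show ?case by (simp add: cong_mod_add)
qed (simp_all add: cong_mod_refl)

lemma cong_mod_msubst:
  assumes "in_vars N p" "\<And>i. i < N \<Longrightarrow> in_vars N (\<tau> i)"
    and "\<And>i. i < N \<Longrightarrow> cong_mod N l (mvar i) (\<tau> i)"
  shows "cong_mod N l p (msubst \<tau> p)"
proof -
  have "cong_mod N l (msubst mvar p) (msubst \<tau> p)"
    unfolding msubst_def
  proof (intro cong_mod_sum cong_mod_mult[OF cong_mod_refl _ in_vars_const])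
    fix m assume "m \<in> Poly_Mapping.keys p"
    then have vars: "\<And>i. i \<in> Poly_Mapping.keys m \<Longrightarrow> i < N" using assms(1) by (auto simp: in_vars_def)
    have mvar: "in_vars N (mvar i :: 'a mpoly)" if "i < N" for i
      using gpart_in_vars[OF mvar_in_gpart[OF that]] .
    show "cong_mod N l (monom_subst mvar m) (monom_subst \<tau> m)"
      unfolding monom_subst_def
      using vars assms(2,3) mvar by (intro cong_mod_prod cong_mod_power in_vars_power) auto
    show "in_vars N (monom_subst \<tau> m)" unfolding monom_subst_def
      using vars assms(2) by (intro in_vars_prod in_vars_power) auto
  qed
  then show ?thesis by (simp add: msubst_mvar_id)
qed

definition var_combinations :: "nat \<Rightarrow> nat \<Rightarrow> 'a::field mpoly set" where
  "var_combinations N i = {(\<Sum>k<N. mvar k * q k) | q. \<forall>k<N. q k \<in> gpart N i}"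

lemma var_combinationsI:
  "a = (\<Sum>k<N. mvar k * q k) \<Longrightarrow> \<forall>k<N. q k \<in> gpart N i \<Longrightarrow> a \<in> var_combinations N i"
  unfolding var_combinations_def by blast

lemma var_combinations_add:
  assumes "a \<in> var_combinations N i" "b \<in> var_combinations N i"
  shows "a + b \<in> var_combinations N i"
proof -
  obtain q r where q: "a = (\<Sum>k<N. mvar k * q k)" "\<forall>k<N. q k \<in> gpart N i"
    and r: "b = (\<Sum>k<N. mvar k * r k)" "\<forall>k<N. r k \<in> gpart N i"
    using assms unfolding var_combinations_def by blast
  show ?thesis
    using q r by (intro var_combinationsI[where q="\<lambda>k. q k + r k"])
      (simp_all add: sum.distrib distrib_left gpart_add)
qed

lemma var_combinations_sum:
  "(\<And>x. x \<in> A \<Longrightarrow> f x \<in> var_combinations N i) \<Longrightarrow> sum f A \<in> var_combinations N i"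
proof (induction A rule: infinite_finite_induct)
  case (infinite A)
  then show ?case by (auto intro: var_combinationsI[where q="\<lambda>_. 0"])
next
  case empty
  then show ?case by (auto intro: var_combinationsI[where q="\<lambda>_. 0"])
qed (auto intro: var_combinations_add)

lemma single_in_var_combinations:
  assumes "Poly_Mapping.keys m \<subseteq> {..<N}" "mdeg m = Suc i"
  shows "(Poly_Mapping.single m c :: 'a::field mpoly) \<in> var_combinations N i"
proof -
  have "Poly_Mapping.keys m \<noteq> {}" using assms(2) by (auto simp: mdeg_def)
  then obtain k where k: "k \<in> Poly_Mapping.keys m" by blast
  define m' where "m' = m - Poly_Mapping.single k 1"
  have m: "m = Poly_Mapping.single k 1 + m'"
    unfolding m'_def using k
    by (intro poly_mapping_eqI) (auto simp: in_keys_iff lookup_add lookup_minus lookup_single when_def)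
  have "Poly_Mapping.keys m' \<subseteq> Poly_Mapping.keys m"
    unfolding m'_def by (auto simp: in_keys_iff lookup_minus)
  moreover have "mdeg m' = i" using assms(2) mdeg_add[of "Poly_Mapping.single k 1" m'] m by simp
  ultimately have g: "Poly_Mapping.single m' c \<in> gpart N i"
    using assms(1) gpart_single[of m' N c] by auto
  have "Poly_Mapping.single m c = (\<Sum>k'<N. mvar k' * (if k' = k then Poly_Mapping.single m' c else 0))"
    using k assms(1) by (subst m) (auto simp: if_distrib[of "\<lambda>x. _ * x"] mvar_def mult_single cong: if_cong)
  then show ?thesis using g by (intro var_combinationsI) auto
qed

lemma gpart_Suc_eq_sum_mvar:
  assumes "g \<in> gpart N (Suc i)"
  obtains q where "\<forall>k<N. q k \<in> gpart N i" "g = (\<Sum>k<N. mvar k * q k :: 'a::field mpoly)"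
proof -
  have "g = (\<Sum>m\<in>Poly_Mapping.keys g. Poly_Mapping.single m (Poly_Mapping.lookup g m))"
    by (rule poly_mapping_sum_keys)
  also have "\<dots> \<in> var_combinations N i"
    using assms by (intro var_combinations_sum single_in_var_combinations)
      (auto simp: gpart_def in_vars_def homog_def)
  finally show ?thesis using that unfolding var_combinations_def by blast
qed

section \<open>Eliminating a variable\<close>

definition lin_coeff :: "'a::zero mpoly \<Rightarrow> nat \<Rightarrow> 'a" where
  "lin_coeff l i = Poly_Mapping.lookup l (Poly_Mapping.single i 1)"

lemma linear_form_expand:
  assumes "l \<in> gpart N 1"
  shows "l = (\<Sum>i<N. mconst (lin_coeff l i) * (mvar i :: 'a::field mpoly))"
proof -
  have inj: "inj_on (\<lambda>i. Poly_Mapping.single i (1::nat)) {..<N}"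
    by (rule inj_onI) (metis lookup_single_eq lookup_single_not_eq zero_neq_one)
  have keys: "Poly_Mapping.keys l \<subseteq> (\<lambda>i. Poly_Mapping.single i 1) ` {..<N}"
  proof
    fix m assume m: "m \<in> Poly_Mapping.keys l"
    then have "mdeg m = 1" "Poly_Mapping.keys m \<subseteq> {..<N}"
      using assms by (auto simp: gpart_def homog_def in_vars_def)
    then show "m \<in> (\<lambda>i. Poly_Mapping.single i 1) ` {..<N}"
      by (metis mdeg_eq_1_imp_single image_eqI lessThan_iff insert_subset keys_single one_neq_zero)
  qed
  have "l = (\<Sum>m\<in>(\<lambda>i. Poly_Mapping.single i 1) ` {..<N}. Poly_Mapping.single m (Poly_Mapping.lookup l m))"
    by (rule poly_mapping_sum_single) (use keys in auto)
  also have "\<dots> = (\<Sum>i<N. Poly_Mapping.single (Poly_Mapping.single i 1) (lin_coeff l i))"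
    unfolding lin_coeff_def by (rule sum.reindex[OF inj, unfolded comp_def])
  also have "\<dots> = (\<Sum>i<N. mconst (lin_coeff l i) * mvar i)"
    by (simp add: mvar_def mult_single)
  finally show ?thesis .
qed

lemma linear_form_nonzero_coeff:
  assumes "(l :: 'a::field mpoly) \<in> gpart N 1" "l \<noteq> 0"
  obtains j where "j < N" "lin_coeff l j \<noteq> 0"
proof (rule ccontr)
  assume "\<not> thesis"
  with that have "\<forall>i<N. lin_coeff l i = 0" by blast
  then have "l = 0" by (subst linear_form_expand[OF assms(1)]) simp
  with assms(2) show False by simp
qed

definition skip_var :: "nat \<Rightarrow> nat \<Rightarrow> 'a::field mpoly" where
  "skip_var j i = mvar (if i < j then i else Suc i)"

definition drop_var :: "nat \<Rightarrow> nat \<Rightarrow> 'a::field mpoly" where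
  "drop_var j i = mvar (if i < j then i else i - 1)"

text \<open>x_j is solved for from l = 0; the other variables are renumbered to close the gap.\<close>
definition elim_subst :: "'a::field mpoly \<Rightarrow> nat \<Rightarrow> nat \<Rightarrow> nat \<Rightarrow> 'a mpoly" where
  "elim_subst l j N i = (if i = j
     then - (\<Sum>k\<in>{..<N} - {j}. mconst (lin_coeff l k / lin_coeff l j) * drop_var j k)
     else drop_var j i)"

lemma msubst_skip_var_drop_var: "i \<noteq> j \<Longrightarrow> msubst (skip_var j) (drop_var j i) = mvar i"
  by (auto simp: drop_var_def skip_var_def)

lemma msubst_elim_subst_skip_var: "msubst (elim_subst l j N) (skip_var j i) = mvar i"
  by (auto simp: elim_subst_def skip_var_def drop_var_def)

lemma skip_var_in_gpart: "i < n \<Longrightarrow> skip_var j i \<in> gpart (Suc n) 1"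
  unfolding skip_var_def by (intro mvar_in_gpart) auto

lemma elim_subst_in_gpart:
  assumes "j < Suc n" "i < Suc n"
  shows "elim_subst l j (Suc n) i \<in> gpart n 1"
proof -
  have drop_var: "drop_var j k \<in> gpart n 1" if "k < Suc n" "k \<noteq> j" for k
    unfolding drop_var_def using assms(1) that by (intro mvar_in_gpart) auto
  show ?thesis
    using assms drop_var gpart_mult[OF gpart_const drop_var]
    by (auto simp: elim_subst_def intro!: gpart_uminus gpart_sum)
qed

lemma msubst_elim_subst_form:
  assumes "l \<in> gpart N 1" "j < N" "lin_coeff l j \<noteq> 0"
  shows "msubst (elim_subst l j N) l = 0"
proof -
  let ?a = "lin_coeff l"
  have "msubst (elim_subst l j N) l = (\<Sum>i<N. mconst (?a i) * elim_subst l j N i)"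
    by (subst linear_form_expand[OF assms(1)]) (simp add: msubst_sum msubst_mult)
  also have "\<dots> = mconst (?a j) * elim_subst l j N j + (\<Sum>i\<in>{..<N} - {j}. mconst (?a i) * drop_var j i)"
    using assms(2) by (simp add: sum.remove elim_subst_def)
  also have "mconst (?a j) * elim_subst l j N j = - (\<Sum>i\<in>{..<N} - {j}. mconst (?a i) * drop_var j i)"
    using assms(3)
    by (simp add: elim_subst_def sum_distrib_left mult.assoc[symmetric] mconst_mult[symmetric])
  finally show ?thesis by simp
qed

lemma cong_mod_msubst_elim_subst:
  assumes "l \<in> gpart N 1" "j < N" "lin_coeff l j \<noteq> 0" "i < N"
  shows "cong_mod N l (mvar i) (msubst (skip_var j) (elim_subst l j N i))"
proof (cases "i = j")
  case False
  then show ?thesis by (simp add: elim_subst_def msubst_skip_var_drop_var cong_mod_refl)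
next
  case True
  let ?a = "lin_coeff l"
  have "msubst (skip_var j) (elim_subst l j N i) = - (\<Sum>k\<in>{..<N} - {j}. mconst (?a k / ?a j) * mvar k)"
    using True by (simp add: elim_subst_def msubst_sum msubst_mult msubst_uminus msubst_skip_var_drop_var)
  moreover have "mconst (1 / ?a j) * l = (\<Sum>k<N. mconst (?a k / ?a j) * mvar k)"
    by (subst linear_form_expand[OF assms(1)])
      (simp add: sum_distrib_left mult.assoc[symmetric] mconst_mult[symmetric])
  moreover have "(\<Sum>k<N. mconst (?a k / ?a j) * mvar k)
      = mconst (?a j / ?a j) * mvar j + (\<Sum>k\<in>{..<N} - {j}. mconst (?a k / ?a j) * (mvar k :: 'a mpoly))"
    using assms(2) by (simp add: sum.remove)
  ultimately have "mvar i - msubst (skip_var j) (elim_subst l j N i) = l * mconst (1 / ?a j)"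
    using True assms(3) by (simp add: mult.commute)
  then show ?thesis unfolding cong_mod_def by (intro exI[of _ "mconst (1 / ?a j)"]) (simp add: in_vars_const)
qed

section \<open>Hyperplane sections\<close>

definition mult_inj :: "nat \<Rightarrow> 'a::field mpoly set \<Rightarrow> 'a mpoly \<Rightarrow> nat \<Rightarrow> bool" where
  "mult_inj N I l i \<longleftrightarrow> (\<forall>f\<in>gpart N i. l * f \<in> I \<longrightarrow> f \<in> I)"

definition mult_surj :: "nat \<Rightarrow> 'a::field mpoly set \<Rightarrow> 'a mpoly \<Rightarrow> nat \<Rightarrow> bool" where
  "mult_surj N I l i \<longleftrightarrow> (\<forall>g\<in>gpart N (Suc i). \<exists>f\<in>gpart N i. g - l * f \<in> I)"

lemma WLP_iff: "WLP N I \<longleftrightarrow> (\<exists>l\<in>gpart N 1. \<forall>i. mult_inj N I l i \<or> mult_surj N I l i)"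
  by (simp add: WLP_def mult_inj_def mult_surj_def)

text \<open>Every form of degree i + 2 is a combination of the variables with coefficients of
degree i + 1.\<close>
lemma mult_surj_Suc:
  fixes F :: "nat \<Rightarrow> 'a::field mpoly"
  assumes "mult_surj N (ideal_gen N F m) l i"
  shows "mult_surj N (ideal_gen N F m) l (Suc i)"
  unfolding mult_surj_def
proof
  let ?I = "ideal_gen N F m"
  fix g :: "'a mpoly" assume "g \<in> gpart N (Suc (Suc i))"
  then obtain q where q: "\<forall>k<N. q k \<in> gpart N (Suc i)" "g = (\<Sum>k<N. mvar k * q k)"
    by (rule gpart_Suc_eq_sum_mvar)
  have "\<forall>k. \<exists>f. k < N \<longrightarrow> f \<in> gpart N i \<and> q k - l * f \<in> ?I"
    using assms q(1) unfolding mult_surj_def by blast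
  then obtain f where f: "\<And>k. k < N \<Longrightarrow> f k \<in> gpart N i \<and> q k - l * f k \<in> ?I" by metis
  have mvar: "(mvar k :: 'a mpoly) \<in> gpart N 1" if "k \<in> {..<N}" for k
    by (rule mvar_in_gpart) (use that in simp)
  have "(\<Sum>k<N. mvar k * f k) \<in> gpart N (Suc i)"
    using f gpart_mult[OF mvar] by (intro gpart_sum) auto
  moreover have "g - l * (\<Sum>k<N. mvar k * f k) = (\<Sum>k<N. mvar k * (q k - l * f k))"
    unfolding q(2) by (simp add: sum_distrib_left sum_subtractf[symmetric] algebra_simps)
  moreover have "\<dots> \<in> ?I"
    using f mvar by (intro ideal_gen_sum ideal_gen_mult) (auto intro: gpart_in_vars)
  ultimately show "\<exists>f\<in>gpart N (Suc i). g - l * f \<in> ?I" by metis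
qed

lemma mult_surj_mono:
  fixes F :: "nat \<Rightarrow> 'a::field mpoly"
  shows "mult_surj N (ideal_gen N F m) l i \<Longrightarrow> i \<le> k \<Longrightarrow> mult_surj N (ideal_gen N F m) l k"
proof (induction k)
  case (Suc k)
  then show ?case by (cases "i = Suc k") (auto intro: mult_surj_Suc)
qed simp

text \<open>\<sigma> maps the polynomials in n + 1 variables onto those in n variables, killing l, and \<tau>
is a right inverse of \<sigma> that is the identity modulo l; hence the kernel of \<sigma> is generated by l.\<close>
locale hyperplane_section =
  fixes n :: nat and l :: "'a::field mpoly" and \<sigma> \<tau> :: "nat \<Rightarrow> 'a mpoly"
  assumes form: "l \<in> gpart (Suc n) 1"
    and subst_gpart: "\<And>i. i < Suc n \<Longrightarrow> \<sigma> i \<in> gpart n 1"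
    and section_gpart: "\<And>i. i < n \<Longrightarrow> \<tau> i \<in> gpart (Suc n) 1"
    and subst_section: "\<And>i. i < n \<Longrightarrow> msubst \<sigma> (\<tau> i) = mvar i"
    and section_subst_cong: "\<And>i. i < Suc n \<Longrightarrow> cong_mod (Suc n) l (mvar i) (msubst \<tau> (\<sigma> i))"
    and subst_form: "msubst \<sigma> l = 0"
begin

abbreviation "I d \<equiv> (mci (Suc n) d :: 'a mpoly set)"
abbreviation "J d \<equiv> ideal_gen n (\<lambda>i. \<sigma> i ^ d i) (Suc n)"
abbreviation "S k \<equiv> (gpart (Suc n) k :: 'a mpoly set)"
abbreviation "R k \<equiv> (gpart n k :: 'a mpoly set)"

definition colon :: "(nat \<Rightarrow> nat) \<Rightarrow> nat \<Rightarrow> 'a mpoly set" where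
  "colon d k = {x \<in> S k. l * x \<in> I d}"

lemma in_vars_msubst_subst: "in_vars (Suc n) p \<Longrightarrow> in_vars n (msubst \<sigma> p)"
  using subst_gpart by (blast intro: in_vars_msubst gpart_in_vars)

lemma in_vars_msubst_section: "in_vars n p \<Longrightarrow> in_vars (Suc n) (msubst \<tau> p)"
  using section_gpart by (blast intro: in_vars_msubst gpart_in_vars)

lemma msubst_msubst_section: "in_vars n r \<Longrightarrow> msubst \<sigma> (msubst \<tau> r) = r"
  by (simp add: msubst_msubst msubst_cong[of n r _ mvar] subst_section msubst_mvar_id)

lemma kernel_msubst_multiple:
  assumes "p \<in> S k" "msubst \<sigma> p = 0"
  obtains q where "in_vars (Suc n) q" "p = l * q"
proof -
  have "cong_mod (Suc n) l p (msubst (\<lambda>i. msubst \<tau> (\<sigma> i)) p)"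
  proof (rule cong_mod_msubst[OF gpart_in_vars[OF assms(1)] _ section_subst_cong])
    fix i assume "i < Suc n"
    then show "in_vars (Suc n) (msubst \<tau> (\<sigma> i))"
      using subst_gpart by (blast intro: in_vars_msubst_section gpart_in_vars)
  qed
  moreover have "msubst (\<lambda>i. msubst \<tau> (\<sigma> i)) p = 0"
    using msubst_msubst[of \<tau> \<sigma> p] assms(2) by simp
  ultimately show ?thesis using that unfolding cong_mod_def by auto
qed

lemma kernel_msubst_0: "{x \<in> S 0. msubst \<sigma> x = 0} = {0}"
proof -
  have "p = 0" if p: "p \<in> S 0" "msubst \<sigma> p = 0" for p
  proof -
    obtain q where "in_vars (Suc n) q" "p = l * q" using kernel_msubst_multiple[OF p] .
    then have "p = hcomp 0 (q * l)" using p(1) by (simp add: hcomp_homog gpart_homog mult.commute)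
    then show "p = 0" using hcomp_mult_homog[OF gpart_homog[OF form]] by simp
  qed
  then show ?thesis by auto
qed

lemma kernel_msubst_Suc: "{x \<in> S (Suc k). msubst \<sigma> x = 0} = (\<lambda>x. l * x) ` S k"
proof
  show "{x \<in> S (Suc k). msubst \<sigma> x = 0} \<subseteq> (\<lambda>x. l * x) ` S k"
  proof (safe)
    fix p assume p: "p \<in> S (Suc k)" "msubst \<sigma> p = 0"
    obtain q where q: "in_vars (Suc n) q" "p = l * q" using kernel_msubst_multiple[OF p] .
    have "p = hcomp (Suc k) (q * l)" using p(1) q(2) by (simp add: hcomp_homog gpart_homog mult.commute)
    also have "\<dots> = l * hcomp k q" using hcomp_mult_homog[OF gpart_homog[OF form]] by simp
    finally show "p \<in> (\<lambda>x. l * x) ` S k" using gpart_hcomp[OF q(1)] by blast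
  qed
  show "(\<lambda>x. l * x) ` S k \<subseteq> {x \<in> S (Suc k). msubst \<sigma> x = 0}"
    using gpart_mult[OF form] by (auto simp: msubst_mult subst_form)
qed

lemma image_msubst_gpart: "msubst \<sigma> ` S k = R k"
proof
  show "msubst \<sigma> ` S k \<subseteq> R k" using gpart_msubst subst_gpart by blast
  show "R k \<subseteq> msubst \<sigma> ` S k"
  proof
    fix r assume r: "r \<in> R k"
    have "msubst \<tau> r \<in> S k" using gpart_msubst[OF r] section_gpart by blast
    moreover have "msubst \<sigma> (msubst \<tau> r) = r" using r by (simp add: msubst_msubst_section gpart_in_vars)
    ultimately show "r \<in> msubst \<sigma> ` S k" by force
  qed
qed

lemma msubst_mci: "p \<in> I d \<Longrightarrow> msubst \<sigma> p \<in> J d"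
proof (elim ideal_genE)
  fix g assume g: "p = (\<Sum>i<Suc n. g i * mvar i ^ d i)" "\<forall>i<Suc n. in_vars (Suc n) (g i)"
  have "msubst \<sigma> p = (\<Sum>i<Suc n. msubst \<sigma> (g i) * \<sigma> i ^ d i)"
    unfolding g(1) by (simp only: msubst_sum msubst_mult msubst_power msubst_mvar)
  then show "msubst \<sigma> p \<in> J d"
    by (rule ideal_genI) (use g(2) in \<open>simp add: in_vars_msubst_subst\<close>)
qed

lemma image_msubst_mci: "msubst \<sigma> ` (I d \<inter> S k) = J d \<inter> R k"
proof
  show "msubst \<sigma> ` (I d \<inter> S k) \<subseteq> J d \<inter> R k"
    using msubst_mci image_msubst_gpart by blast
  show "J d \<inter> R k \<subseteq> msubst \<sigma> ` (I d \<inter> S k)"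
  proof
    fix r assume r: "r \<in> J d \<inter> R k"
    obtain g where g: "r = (\<Sum>i<Suc n. g i * \<sigma> i ^ d i)" "\<forall>i<Suc n. in_vars n (g i)"
      using r by (auto elim: ideal_genE)
    define u where "u = (\<Sum>i<Suc n. msubst \<tau> (g i) * mvar i ^ d i)"
    have vars: "\<forall>i<Suc n. in_vars (Suc n) (msubst \<tau> (g i))"
      using g(2) by (simp add: in_vars_msubst_section)
    have "u \<in> I d" unfolding u_def by (rule ideal_genI[OF refl vars])
    then have "hcomp k u \<in> I d"
      by (rule hcomp_ideal_gen[rotated]) (rule homog_power[OF gpart_homog[OF mvar_in_gpart]], simp)
    moreover have "in_vars (Suc n) u"
      unfolding u_def using vars
      by (intro in_vars_sum in_vars_mult in_vars_power gpart_in_vars[OF mvar_in_gpart]) auto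
    moreover have "msubst \<sigma> u = r"
      unfolding u_def g(1) msubst_sum msubst_mult msubst_power msubst_mvar
      using g(2) by (intro sum.cong refl) (simp add: msubst_msubst_section)
    moreover have "msubst \<sigma> (hcomp k u) = hcomp k (msubst \<sigma> u)" if "in_vars (Suc n) u"
      by (rule msubst_hcomp[OF that]) (use subst_gpart gpart_homog in blast)
    ultimately show "r \<in> msubst \<sigma> ` (I d \<inter> S k)"
      using r by (intro image_eqI[of _ _ "hcomp k u"]) (auto simp: gpart_hcomp hcomp_homog gpart_homog)
  qed
qed

lemma subspace_mci_gpart: "V.subspace (I d \<inter> S k)"
  by (intro V.subspace_inter subspace_ideal_gen subspace_gpart)

lemma subspace_colon: "V.subspace (colon d k)"
proof -
  have "l * mscale c x = mscale c (l * x)" for c x by (simp add: mscale_eq_const_mult mult.left_commute)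
  moreover have "mscale c x \<in> I d" if "x \<in> I d" for c x
    using that by (simp add: mscale_eq_const_mult ideal_gen_mult in_vars_const)
  ultimately show ?thesis unfolding V.subspace_def colon_def
    by (auto simp: gpart_add gpart_mscale distrib_left ideal_gen_add ideal_gen_0)
qed

lemma rank_nullity_msubst:
  "V.subspace U \<Longrightarrow> U \<subseteq> S k \<Longrightarrow>
    V.dim (msubst \<sigma> ` U) + V.dim {x \<in> U. msubst \<sigma> x = 0} = V.dim U"
  by (rule rank_nullity_gpart[OF _ _ linear_msubst])

lemma rank_nullity_mult:
  "V.subspace U \<Longrightarrow> U \<subseteq> S k \<Longrightarrow> V.dim ((\<lambda>x. l * x) ` U) + V.dim {x \<in> U. l * x = 0} = V.dim U"
  by (rule rank_nullity_gpart[OF _ _ linear_mult_left])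

lemma dim_mci_le: "V.dim (I d \<inter> S k) \<le> V.dim (S k)"
  by (rule dim_mono_gpart) auto

lemma hilb_fun_section:
  "int (hilb_fun n (J d) k) = int (V.dim (msubst \<sigma> ` S k)) - int (V.dim (msubst \<sigma> ` (I d \<inter> S k)))"
proof -
  have "V.dim (J d \<inter> R k) \<le> V.dim (R k)" by (rule dim_mono_gpart) auto
  then show ?thesis unfolding hilb_fun_def kdim_def image_msubst_gpart image_msubst_mci by simp
qed

lemma hilb_fun_section_0: "hilb_fun n (J d) 0 = hilb_fun (Suc n) (I d) 0"
proof -
  have "{x \<in> I d \<inter> S 0. msubst \<sigma> x = 0} = {0}"
    using kernel_msubst_0 by (auto simp: ideal_gen_0)
  then have "int (hilb_fun n (J d) 0) = int (V.dim (S 0)) - int (V.dim (I d \<inter> S 0))"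
    using hilb_fun_section[of d 0] kernel_msubst_0
      rank_nullity_msubst[OF subspace_gpart order_refl, of 0]
      rank_nullity_msubst[OF subspace_mci_gpart[of d] Int_lower2, of 0]
    by (simp add: V.dim_singleton_0)
  then show ?thesis using dim_mci_le[of d 0] by (simp add: hilb_fun_def kdim_def)
qed

text \<open>The cokernel of multiplication by l from degree k to degree k + 1, computed via
the kernels of \<sigma> and of multiplication by l.\<close>
lemma hilb_fun_section_Suc:
  "int (hilb_fun n (J d) (Suc k)) = int (V.dim (S (Suc k))) - int (V.dim (S k))
     - int (V.dim (I d \<inter> S (Suc k))) + int (V.dim (colon d k))"
proof -
  have kernel: "{x \<in> I d \<inter> S (Suc k). msubst \<sigma> x = 0} = (\<lambda>x. l * x) ` colon d k"
    using kernel_msubst_Suc[of k] unfolding colon_def by auto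
  have mult_kernel: "{x \<in> colon d k. l * x = 0} = {x \<in> S k. l * x = 0}"
    unfolding colon_def by (auto simp: ideal_gen_0)
  have "colon d k \<subseteq> S k" unfolding colon_def by auto
  then show ?thesis
    using hilb_fun_section[of d "Suc k"]
      rank_nullity_msubst[OF subspace_gpart order_refl, of "Suc k"]
      rank_nullity_msubst[OF subspace_mci_gpart[of d] Int_lower2, of "Suc k"]
      rank_nullity_mult[OF subspace_gpart order_refl, of k]
      rank_nullity_mult[OF subspace_colon \<open>colon d k \<subseteq> S k\<close>]
    unfolding kernel_msubst_Suc kernel mult_kernel by simp
qed

lemma hilb_fun_section_Suc_if_inj:
  assumes "mult_inj (Suc n) (I d) l k"
  shows "int (hilb_fun n (J d) (Suc k)) = int (hilb_fun (Suc n) (I d) (Suc k)) - int (hilb_fun (Suc n) (I d) k)"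
proof -
  have "colon d k = I d \<inter> S k"
    using assms ideal_gen_mult[OF _ gpart_in_vars[OF form]] unfolding colon_def mult_inj_def by auto
  then show ?thesis
    using hilb_fun_section_Suc[of d k] dim_mci_le[of d k] dim_mci_le[of d "Suc k"]
    by (simp add: hilb_fun_def kdim_def)
qed

lemma hilb_fun_section_Suc_if_surj:
  assumes "mult_surj (Suc n) (I d) l k"
  shows "hilb_fun n (J d) (Suc k) = 0" "hilb_fun (Suc n) (I d) (Suc k) \<le> hilb_fun (Suc n) (I d) k"
proof -
  have "msubst \<sigma> ` S (Suc k) \<subseteq> msubst \<sigma> ` (I d \<inter> S (Suc k))"
  proof
    fix y assume "y \<in> msubst \<sigma> ` S (Suc k)"
    then obtain g where g: "g \<in> S (Suc k)" "y = msubst \<sigma> g" by auto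
    then obtain f where f: "f \<in> S k" "g - l * f \<in> I d" using assms unfolding mult_surj_def by blast
    have "l * f \<in> S (Suc k)" using gpart_mult[OF form f(1)] by simp
    then have "g - l * f \<in> S (Suc k)" by (rule gpart_diff[OF g(1)])
    moreover have "msubst \<sigma> (g - l * f) = y" using g by (simp add: msubst_diff msubst_mult subst_form)
    ultimately show "y \<in> msubst \<sigma> ` (I d \<inter> S (Suc k))" using f(2) by force
  qed
  then have "msubst \<sigma> ` S (Suc k) = msubst \<sigma> ` (I d \<inter> S (Suc k))" by auto
  then show zero: "hilb_fun n (J d) (Suc k) = 0" using hilb_fun_section[of d "Suc k"] by simp
  have "I d \<inter> S k \<subseteq> colon d k"
    unfolding colon_def using ideal_gen_mult[OF _ gpart_in_vars[OF form]] by auto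
  then have "V.dim (I d \<inter> S k) \<le> V.dim (colon d k)"
    by (rule dim_mono_gpart) (auto simp: colon_def)
  then show "hilb_fun (Suc n) (I d) (Suc k) \<le> hilb_fun (Suc n) (I d) k"
    using hilb_fun_section_Suc[of d k] zero dim_mci_le[of d k] dim_mci_le[of d "Suc k"]
    by (simp add: hilb_fun_def kdim_def)
qed

end

text \<open>Applied with c the Hilbert function of the section, \<delta> the first difference of h and surj k
the surjectivity of multiplication by l from degree k to k + 1.\<close>
lemma eq_truncated_difference:
  fixes c \<delta> :: "nat \<Rightarrow> int" and surj :: "nat \<Rightarrow> bool"
  assumes "c 0 = \<delta> 0" "\<delta> 0 \<ge> 0" "\<And>k. c k \<ge> 0"
    and "\<And>k. \<not> surj k \<Longrightarrow> c (Suc k) = \<delta> (Suc k)"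
    and "\<And>k. surj k \<Longrightarrow> c (Suc k) = 0 \<and> \<delta> (Suc k) \<le> 0"
    and "\<And>k. surj k \<Longrightarrow> surj (Suc k)"
  shows "c k = (if \<forall>i\<le>k. 0 \<le> \<delta> i then \<delta> k else 0)"
proof (cases k)
  case 0
  then show ?thesis using assms(1,2) by simp
next
  case (Suc k')
  show ?thesis
  proof (cases "\<forall>i\<le>k. 0 \<le> \<delta> i")
    case True
    then show ?thesis using assms(4,5)[of k'] Suc by fastforce
  next
    case False
    then obtain i where i: "i \<le> k" "\<delta> i < 0" by (auto simp: not_le)
    then obtain i' where i': "i = Suc i'" using assms(2) by (cases i) auto
    have "surj i'" using assms(3)[of i] assms(4)[of i'] i i' by fastforce
    then have "surj (i' + m)" for m by (induction m) (auto intro: assms(6))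
    then have "surj k'" using i i' Suc by (metis Suc_le_mono le_add_diff_inverse)
    then have "c k = 0" using Suc assms(5) by simp
    then show ?thesis using False by (simp only: if_False)
  qed
qed

lemma fps_nth_mult_1_minus_X:
  "fps_nth (f * (1 - fps_X)) k = fps_nth f k - (if k = 0 then 0 else fps_nth f (k - 1))"
  for f :: "'a::comm_ring_1 fps"
  by (simp add: algebra_simps fps_X_mult_nth mult.commute[of f])

context hyperplane_section
begin

lemma hilb_series_section:
  assumes lefschetz: "\<And>k. mult_inj (Suc n) (I d) l k \<or> mult_surj (Suc n) (I d) l k"
  shows "hilb_series n (J d) = trunc_neg ((\<Prod>i<Suc n. 1 - fps_X ^ d i) * geom_fps ^ n)"
proof -
  let ?H = "(\<Prod>i<Suc n. 1 - fps_X ^ d i) * geom_fps ^ Suc n :: int fps"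
  let ?P = "(\<Prod>i<Suc n. 1 - fps_X ^ d i) * geom_fps ^ n :: int fps"
  have H: "fps_nth ?H k = int (hilb_fun (Suc n) (I d) k)" for k
    by (simp add: hilb_fun_mci_coeff)
  have P: "?P = ?H * (1 - fps_X)"
    using geom_fps_inverse by (simp add: mult.assoc)
  have P_0: "fps_nth ?P 0 = int (hilb_fun (Suc n) (I d) 0)"
    unfolding P fps_nth_mult_1_minus_X H by simp
  have P_Suc: "fps_nth ?P (Suc k) = int (hilb_fun (Suc n) (I d) (Suc k)) - int (hilb_fun (Suc n) (I d) k)" for k
    unfolding P fps_nth_mult_1_minus_X H by simp
  have coeff: "int (hilb_fun n (J d) k) = (if \<forall>i\<le>k. 0 \<le> fps_nth ?P i then fps_nth ?P k else 0)" for k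
  proof (rule eq_truncated_difference[where surj = "mult_surj (Suc n) (I d) l"])
    fix k
    show "\<not> mult_surj (Suc n) (I d) l k \<Longrightarrow> int (hilb_fun n (J d) (Suc k)) = fps_nth ?P (Suc k)"
      using lefschetz[of k] hilb_fun_section_Suc_if_inj[of d k] P_Suc by simp
    show "mult_surj (Suc n) (I d) l k \<Longrightarrow> int (hilb_fun n (J d) (Suc k)) = 0 \<and> fps_nth ?P (Suc k) \<le> 0"
      using hilb_fun_section_Suc_if_surj[of d k] P_Suc by simp
    show "mult_surj (Suc n) (I d) l k \<Longrightarrow> mult_surj (Suc n) (I d) l (Suc k)"
      by (rule mult_surj_Suc)
  qed (unfold P_0 hilb_fun_section_0, simp_all)
  show ?thesis
    unfolding hilb_series_def trunc_neg_def by (rule fps_ext, unfold fps_nth_Abs_fps, rule coeff)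
qed

end

lemma WLP_mci_nonzero:
  assumes "\<forall>i<Suc n. d i > 0" "WLP (Suc n) (mci (Suc n) d :: 'a::field mpoly set)"
  obtains l :: "'a::field mpoly" where "l \<in> gpart (Suc n) 1" "l \<noteq> 0"
    "\<And>k. mult_inj (Suc n) (mci (Suc n) d) l k \<or> mult_surj (Suc n) (mci (Suc n) d) l k"
proof -
  let ?I = "mci (Suc n) d :: 'a mpoly set"
  obtain l0 where l0: "l0 \<in> gpart (Suc n) 1" "\<And>k. mult_inj (Suc n) ?I l0 k \<or> mult_surj (Suc n) ?I l0 k"
    using assms(2) unfolding WLP_iff by blast
  show ?thesis
  proof (cases "l0 = 0")
    case False
    show ?thesis by (rule that[OF l0(1) False]) (rule l0(2))
  next
    case True
    text \<open>Then A_1 = 0, and any nonzero linear form is a Lefschetz element.\<close>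
    have "\<not> mult_inj (Suc n) ?I l0 0"
      using True one_notin_mci[OF assms(1)] gpart_one ideal_gen_0 by (force simp: mult_inj_def)
    then have "mult_surj (Suc n) ?I l0 0" using l0(2)[of 0] by blast
    then have "mult_surj (Suc n) ?I l0 k" for k using mult_surj_mono by blast
    then have "mult_surj (Suc n) ?I (mvar 0) k" for k
      using True unfolding mult_surj_def by (metis gpart_0 mult_zero_right mult_zero_left diff_zero)
    moreover have "mvar 0 \<noteq> (0 :: 'a mpoly)"
      unfolding mvar_def by (metis lookup_single_eq lookup_zero zero_neq_one)
    ultimately show ?thesis using that mvar_in_gpart[of 0 "Suc n"] by blast
  qed
qed

lemma hyperplane_section_elim_subst:
  assumes "l \<in> gpart (Suc n) 1" "j < Suc n" "lin_coeff l j \<noteq> 0"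
  shows "hyperplane_section n l (elim_subst l j (Suc n)) (skip_var j)"
proof
  show "elim_subst l j (Suc n) i \<in> gpart n 1" if "i < Suc n" for i
    using elim_subst_in_gpart assms(2) that .
  show "skip_var j i \<in> gpart (Suc n) 1" if "i < n" for i
    using skip_var_in_gpart that .
  show "cong_mod (Suc n) l (mvar i) (msubst (skip_var j) (elim_subst l j (Suc n) i))" if "i < Suc n" for i
    using cong_mod_msubst_elim_subst assms that .
  show "msubst (elim_subst l j (Suc n)) l = 0"
    using msubst_elim_subst_form assms .
qed (use assms(1) msubst_elim_subst_skip_var in auto)

theorem theorem4p17:
  fixes n :: nat and d :: "nat \<Rightarrow> nat"
  assumes "CHAR('k::field) > 0"
    and "\<forall>i<n+1. d i > 0"
    and "WLP (n+1) (ideal_gen (n+1) (\<lambda>i. (mvar i :: 'k mpoly) ^ d i) (n+1))"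
  shows "\<exists>f :: nat \<Rightarrow> 'k mpoly. (\<forall>i<n+1. f i \<in> gpart n (d i)) \<and>
           hilb_series n (ideal_gen n f (n+1)) =
           trunc_neg ((\<Prod>i<n+1. 1 - fps_X ^ d i) * geom_fps ^ n)"
proof -
  obtain l :: "'k mpoly" where l: "l \<in> gpart (Suc n) 1" "l \<noteq> 0"
    and lefschetz: "\<And>k. mult_inj (Suc n) (mci (Suc n) d) l k \<or> mult_surj (Suc n) (mci (Suc n) d) l k"
    using WLP_mci_nonzero[of n d] assms(2,3) by auto
  obtain j where j: "j < Suc n" "lin_coeff l j \<noteq> 0"
    using linear_form_nonzero_coeff[OF l] .
  let ?\<sigma> = "elim_subst l j (Suc n)"
  interpret hyperplane_section n l ?\<sigma> "skip_var j"
    by (rule hyperplane_section_elim_subst[OF l(1) j])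
  have "\<forall>i<Suc n. ?\<sigma> i ^ d i \<in> gpart n (d i)"
    using elim_subst_in_gpart j(1) by (blast intro: gpart_power)
  then show ?thesis
    using hilb_series_section[OF lefschetz] by (intro exI[of _ "\<lambda>i. ?\<sigma> i ^ d i"]) simp
qed

end
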